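(* The $\mathbb{Q}$-linear map $\phi_{\mathrm{inv}}:\mathrm{FQSym}\to\mathbb{Q}(\mathbf{x})\#\mathbb{N}$, $\mathcal{F}_w\mapsto \frac{\mathrm{wt}(w)}{[n]!}u^n$ for $w\in\mathfrak{S}_n$, restricts to an algebra homomorphism $\mathrm{PBT}\to\mathbb{Q}(\mathbf{x})\#\mathbb{N}$.
   Context: Let $\mathbb{Q}(\mathbf{x})=\mathbb{Q}(x_1,x_2,\ldots)$ with field endomorphism $F$, $F(x_i)=x_{i+1}$. Define $[n]:=x_1+\cdots+x_n$, $[0]!:=1$, $[n]!:=[n]\cdot F([n-1]!)$. For a $k$-element set $S=\{i_1>\cdots>i_k\}$ of positive integers, $\mathrm{wt}(S):=\frac{\prod_{j=1}^k F^{i_j-1}[j]}{[k]!}$ ($\mathrm{wt}(\emptyset)=1$). For a permutation $w=(w_1,\ldots,w_n)$ in one-line notation, $\mathrm{wt}(w)$ is defined recursively: the empty permutation has weight $1$; otherwise let $k:=w_1-1$, $S(w):=\{i:w_i\le k\}$, $a$ the permutation of $\{1,\ldots,k\}$ listing the values $w_i\le k$ in order of increasing $i$, $\hat b$ the permutation of $\{1,\ldots,n-k-1\}$ listing the values $w_i-k-1$ for $w_i>k+1$ in order of increasing $i$; then $\mathrm{wt}(w):=\mathrm{wt}(S(w))\,\mathrm{wt}(a)\,F^{k+1}(\mathrm{wt}(\hat b))$. $\mathrm{FQSym}$ (Malvenuto–Reutenauer algebra) has $\mathbb{Q}$-basis $\{\mathcal{F}_w: w\in\bigsqcup_{n\ge0}\mathfrak{S}_n\}$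 with product $\mathcal{F}_a\mathcal{F}_b=\sum_w\mathcal{F}_w$ for $a\in\mathfrak{S}_k,b\in\mathfrak{S}_\ell$, summing over all shuffles $w$ of the words $(a_1,\ldots,a_k)$ and $(b_1+k,\ldots,b_\ell+k)$. For a poset $P$ on $\{1,\ldots,n\}$, $\mathcal{F}_P:=\sum_{w\in\mathcal{L}(P)}\mathcal{F}_w$, where $\mathcal{L}(P)$ is the set of permutations $w$ such that $i<_Pj$ implies $i$ appears before $j$ in $w_1\cdots w_n$. A recursively labelled forest is a partial order on $\{1,\ldots,n\}$ in which every element covers at most one other element and each subtree $P_{\geq i}=\{j:j\geq_P i\}$ is an interval of consecutive integers. $\mathrm{PBT}$ (Loday–Ronco algebra) is the subalgebra of $\mathrm{FQSym}$ spanned by all $\mathcal{F}_P$ for $P$ a recursively labelled forest. The skew semigroup algebra $\mathbb{Q}(\mathbf{x})\#\mathbb{N}$ is the free $\mathbb{Q}(\mathbf{x})$-module with basis $\{1,u,u^2,\ldots\}$ and multiplication $f u^k\cdot g u^\ell=(f\,F^k(g))u^{k+\ell}$. *)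

theory Defs
  imports Complex_Main "HOL-Library.Poly_Mapping" "HOL-Computational_Algebra.Fraction_Field"
begin

text \<open>Polynomials over Q in countably many variables: a monomial is an exponent
vector (nat =>0 nat), where index j stands for the variable x_(j+1).
Q(x) is the fraction field of this integral domain.\<close>

type_synonym mpoly = "(nat \<Rightarrow>\<^sub>0 nat) \<Rightarrow>\<^sub>0 rat"
type_synonym ratfun = "mpoly fract"

definition var :: "nat \<Rightarrow> ratfun" where
  "var i = Fract (Poly_Mapping.single (Poly_Mapping.single (i - 1) 1) 1) 1"

definition rconst :: "rat \<Rightarrow> ratfun" where
  "rconst c = Fract (Poly_Mapping.single 0 c) 1"

definition mshift :: "(nat \<Rightarrow>\<^sub>0 nat) \<Rightarrow> (nat \<Rightarrow>\<^sub>0 nat)" where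
  "mshift m = Abs_poly_mapping (\<lambda>k. if k = 0 then 0 else Poly_Mapping.lookup m (k - 1))"

definition pshift :: "mpoly \<Rightarrow> mpoly" where
  "pshift p = (\<Sum>m\<in>Poly_Mapping.keys p. Poly_Mapping.single (mshift m) (Poly_Mapping.lookup p m))"

definition Fend :: "ratfun \<Rightarrow> ratfun" where
  "Fend q = (case (SOME (a, b). b \<noteq> 0 \<and> q = Fract a b) of (a, b) \<Rightarrow> Fract (pshift a) (pshift b))"

definition brk :: "nat \<Rightarrow> ratfun" where
  "brk n = (\<Sum>i = 1..n. var i)"

fun bfact :: "nat \<Rightarrow> ratfun" where
  "bfact 0 = 1"
| "bfact (Suc n) = brk (Suc n) * Fend (bfact n)"

definition wt_set :: "nat set \<Rightarrow> ratfun" where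
  "wt_set S = (let L = rev (sorted_list_of_set S); k = length L in
     (\<Prod>j<k. (Fend ^^ (L ! j - 1)) (brk (j + 1))) / bfact k)"

text \<open>Since w_1 = k+1 is neither <= k nor > k+1, the lists a and bh may be
computed from the tail of w; this makes the recursion structurally decreasing.\<close>
function wt :: "nat list \<Rightarrow> ratfun" where
  "wt [] = 1"
| "wt (v # vs) =
     (let w = v # vs; k = v - 1;
          S = {i. 1 \<le> i \<and> i \<le> length w \<and> w ! (i - 1) \<le> k};
          a = filter (\<lambda>x. x \<le> k) vs;
          bh = map (\<lambda>x. x - k - 1) (filter (\<lambda>x. x > k + 1) vs)
      in wt_set S * wt a * (Fend ^^ (k + 1)) (wt bh))"
  by pat_completeness auto
termination
  by (relation "measure length") (auto simp: le_imp_less_Suc)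

definition is_perm :: "nat \<Rightarrow> nat list \<Rightarrow> bool" where
  "is_perm n w \<longleftrightarrow> distinct w \<and> set w = {1..n}"

type_synonym fqsym = "nat list \<Rightarrow>\<^sub>0 rat"

definition FQSym :: "fqsym set" where
  "FQSym = {f. \<forall>w\<in>Poly_Mapping.keys f. is_perm (length w) w}"

definition fqF :: "nat list \<Rightarrow> fqsym" where
  "fqF w = Poly_Mapping.single w 1"

definition fq_mult :: "fqsym \<Rightarrow> fqsym \<Rightarrow> fqsym" where
  "fq_mult f g = (\<Sum>a\<in>Poly_Mapping.keys f. \<Sum>b\<in>Poly_Mapping.keys g.
      \<Sum>w\<in>shuffles a (map (\<lambda>x. x + length a) b). Poly_Mapping.single w (Poly_Mapping.lookup f a * Poly_Mapping.lookup g b))"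

definition fq_one :: fqsym where
  "fq_one = fqF []"

definition fq_scale :: "rat \<Rightarrow> fqsym \<Rightarrow> fqsym" where
  "fq_scale c f = Poly_Mapping.map (\<lambda>x. c * x) f"

definition linext :: "nat \<Rightarrow> (nat \<times> nat) set \<Rightarrow> nat list set" where
  "linext n P = {w. is_perm n w \<and>
     (\<forall>p q. p < length w \<and> q < length w \<and> (w ! p, w ! q) \<in> P \<and> w ! p \<noteq> w ! q \<longrightarrow> p < q)}"

definition fqF_poset :: "nat \<Rightarrow> (nat \<times> nat) set \<Rightarrow> fqsym" where
  "fqF_poset n P = (\<Sum>w\<in>linext n P. fqF w)"

definition covers :: "(nat \<times> nat) set \<Rightarrow> nat \<Rightarrow> nat \<Rightarrow> bool" where
  "covers P j i \<longleftrightarrow> (i, j) \<in> P \<and> i \<noteq> j \<and>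
     \<not> (\<exists>k. k \<noteq> i \<and> k \<noteq> j \<and> (i, k) \<in> P \<and> (k, j) \<in> P)"

definition rec_labelled_forest :: "nat \<Rightarrow> (nat \<times> nat) set \<Rightarrow> bool" where
  "rec_labelled_forest n P \<longleftrightarrow> partial_order_on {1..n} P \<and>
     (\<forall>j\<in>{1..n}. \<forall>i1 i2. covers P j i1 \<and> covers P j i2 \<longrightarrow> i1 = i2) \<and>
     (\<forall>i\<in>{1..n}. \<exists>a b. {j. (i, j) \<in> P} = {a..b})"

inductive_set PBT :: "fqsym set" where
  PBT_zero: "0 \<in> PBT"
| PBT_gen: "rec_labelled_forest n P \<Longrightarrow> fqF_poset n P \<in> PBT"
| PBT_add: "f \<in> PBT \<Longrightarrow> g \<in> PBT \<Longrightarrow> f + g \<in> PBT"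
| PBT_scale: "f \<in> PBT \<Longrightarrow> fq_scale c f \<in> PBT"

type_synonym skew = "nat \<Rightarrow>\<^sub>0 ratfun"

definition skew_mult :: "skew \<Rightarrow> skew \<Rightarrow> skew" where
  "skew_mult A B = (\<Sum>k\<in>Poly_Mapping.keys A. \<Sum>l\<in>Poly_Mapping.keys B.
      Poly_Mapping.single (k + l) (Poly_Mapping.lookup A k * (Fend ^^ k) (Poly_Mapping.lookup B l)))"

definition skew_one :: skew where
  "skew_one = Poly_Mapping.single 0 1"

definition phi_inv :: "fqsym \<Rightarrow> skew" where
  "phi_inv f = (\<Sum>w\<in>Poly_Mapping.keys f.
      Poly_Mapping.single (length w) (rconst (Poly_Mapping.lookup f w) * (wt w / bfact (length w))))"

end

theory Submission
  imports Defs
begin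

text \<open>The key fact is a hook length formula: if \<open>P\<close> is a recursively labelled forest on
\<open>{1..n}\<close>, then the weights of its linear extensions sum to \<open>[n]!\<close> times the product, over all
\<open>i\<close>, of the inverses of \<open>x\<^sub>j\<close> summed over the subtree \<open>P\<^sub>\<ge>\<^sub>i\<close>. It is proved by induction on
\<open>n\<close>, sorting the extensions by their first letter \<open>r\<close>, which must be a root: the rest of the word
is a shuffle of extensions of the forests to the left and to the right of \<open>r\<close>, and the factor
\<open>wt(S(w))\<close> summed over all these shuffles telescopes to a ratio of bracket factorials.
Consequently \<open>\<phi>\<^sub>i\<^sub>n\<^sub>v\<close> maps \<open>\<F>\<^sub>P\<close> to the hook product times \<open>u\<^sup>n\<close>. The product \<open>\<F>\<^sub>P \<F>\<^sub>Q\<close> is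
\<open>\<F>\<close> of the forest obtained by placing \<open>Q\<close>, shifted by \<open>n\<close>, to the right of \<open>P\<close>, whose hook
product is that of \<open>P\<close> times \<open>F\<^sup>n\<close> applied to that of \<open>Q\<close> -- which is exactly the product of
\<open>\<bbbQ>(x)#\<nat>\<close>. Bilinearity extends this to all of PBT.\<close>

section \<open>The shift endomorphism\<close>

lemma lookup_mshift: "Poly_Mapping.lookup (mshift m) k = (if k = 0 then 0 else Poly_Mapping.lookup m (k - 1))"
proof -
  have "{k. (if k = 0 then 0 else Poly_Mapping.lookup m (k - 1)) \<noteq> 0} \<subseteq> Suc ` Poly_Mapping.keys m"
  proof
    fix k assume "k \<in> {k. (if k = 0 then 0 else Poly_Mapping.lookup m (k - 1)) \<noteq> 0}"
    then have "k \<noteq> 0" "Poly_Mapping.lookup m (k - 1) \<noteq> 0" by (auto split: if_splits)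
    then show "k \<in> Suc ` Poly_Mapping.keys m" by (intro image_eqI[of _ _ "k - 1"]) (auto simp: in_keys_iff)
  qed
  then have "finite {k. (if k = 0 then 0 else Poly_Mapping.lookup m (k - 1)) \<noteq> 0}"
    by (rule finite_subset) simp
  then show ?thesis unfolding mshift_def by simp
qed

lemma mshift_add: "mshift (m + n) = mshift m + mshift n"
  by (rule poly_mapping_eqI) (simp add: lookup_mshift lookup_add)

lemma mshift_zero: "mshift 0 = 0"
  by (rule poly_mapping_eqI) (simp add: lookup_mshift)

lemma inj_mshift: "inj mshift"
proof (rule injI)
  fix m n assume "mshift m = mshift n"
  then have "Poly_Mapping.lookup (mshift m) (Suc k) = Poly_Mapping.lookup (mshift n) (Suc k)" for k by simp
  then show "m = n" by (intro poly_mapping_eqI) (simp add: lookup_mshift)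
qed

lemma mshift_single: "mshift (Poly_Mapping.single j c) = Poly_Mapping.single (Suc j) c"
  by (rule poly_mapping_eqI) (auto simp: lookup_mshift lookup_single when_def)

lemma pshift_eq_sum:
  assumes "finite A" "Poly_Mapping.keys p \<subseteq> A"
  shows "pshift p = (\<Sum>m\<in>A. Poly_Mapping.single (mshift m) (Poly_Mapping.lookup p m))"
  unfolding pshift_def
  by (rule sum.mono_neutral_left) (use assms in \<open>auto simp: in_keys_iff\<close>)

lemma pshift_add: "pshift (p + q) = pshift p + pshift q"
proof -
  let ?A = "Poly_Mapping.keys p \<union> Poly_Mapping.keys q"
  have "Poly_Mapping.keys (p + q) \<subseteq> ?A" by (rule keys_add)
  then show ?thesis
    by (simp add: pshift_eq_sum[of ?A] lookup_add single_add sum.distrib)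
qed

lemma pshift_zero: "pshift 0 = 0"
  by (simp add: pshift_def)

lemma pshift_single: "pshift (Poly_Mapping.single m c) = Poly_Mapping.single (mshift m) c"
  by (simp add: pshift_eq_sum[of "{m}"])

lemma pshift_sum: "pshift (sum f A) = (\<Sum>x\<in>A. pshift (f x))"
  by (induction A rule: infinite_finite_induct) (simp_all add: pshift_zero pshift_add)

lemma poly_mapping_sum_single:
  "p = (\<Sum>m\<in>Poly_Mapping.keys p. Poly_Mapping.single m (Poly_Mapping.lookup p m))"
proof (rule poly_mapping_eqI)
  fix k
  have "(\<Sum>m\<in>Poly_Mapping.keys p. Poly_Mapping.lookup (Poly_Mapping.single m (Poly_Mapping.lookup p m)) k)
     = (\<Sum>m\<in>Poly_Mapping.keys p. if m = k then Poly_Mapping.lookup p m else 0)"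
    by (intro sum.cong) (auto simp: lookup_single when_def)
  also have "\<dots> = Poly_Mapping.lookup p k" by (auto simp: in_keys_iff)
  finally show "Poly_Mapping.lookup p k =
      Poly_Mapping.lookup (\<Sum>m\<in>Poly_Mapping.keys p. Poly_Mapping.single m (Poly_Mapping.lookup p m)) k"
    by (simp add: lookup_sum)
qed

lemma pshift_mult: "pshift (p * q) = pshift p * pshift q"
proof -
  let ?prod = "\<lambda>f. \<Sum>m\<in>Poly_Mapping.keys p. \<Sum>n\<in>Poly_Mapping.keys q.
      Poly_Mapping.single (f m + f n) (Poly_Mapping.lookup p m * Poly_Mapping.lookup q n)"
  have "p * q = ?prod id"
    by (subst poly_mapping_sum_single[of p], subst poly_mapping_sum_single[of q])
       (simp add: sum_product mult_single)
  then have "pshift (p * q) = ?prod mshift"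
    by (simp add: pshift_sum pshift_single mshift_add)
  also have "\<dots> = pshift p * pshift q"
    by (simp add: pshift_def sum_product mult_single)
  finally show ?thesis .
qed

lemma lookup_pshift_mshift: "Poly_Mapping.lookup (pshift p) (mshift m) = Poly_Mapping.lookup p m"
proof -
  have "Poly_Mapping.lookup (pshift p) (mshift m) =
     (\<Sum>m'\<in>Poly_Mapping.keys p. (Poly_Mapping.lookup p m' when mshift m' = mshift m))"
    by (simp add: pshift_def lookup_sum lookup_single)
  also have "\<dots> = (\<Sum>m'\<in>Poly_Mapping.keys p. (if m' = m then Poly_Mapping.lookup p m' else 0))"
    using inj_mshift by (intro sum.cong) (auto simp: when_def inj_eq)
  also have "\<dots> = Poly_Mapping.lookup p m"
    by (auto simp: in_keys_iff)
  finally show ?thesis .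
qed

lemma pshift_eq_0_iff [simp]: "pshift p = 0 \<longleftrightarrow> p = 0"
proof
  assume "pshift p = 0"
  then show "p = 0"
    by (intro poly_mapping_eqI) (metis lookup_pshift_mshift lookup_zero)
qed (simp add: pshift_zero)

lemma pshift_one: "pshift 1 = 1"
  by (metis pshift_single mshift_zero single_one)

text \<open>\<open>Fend\<close> is defined through an arbitrary representative of the fraction; the definition is
sound because \<open>pshift\<close> is a ring homomorphism.\<close>

lemma Fend_Fract:
  assumes "b \<noteq> 0"
  shows "Fend (Fract a b) = Fract (pshift a) (pshift b)"
proof -
  let ?P = "\<lambda>(x, y). y \<noteq> 0 \<and> Fract a b = Fract x y"
  have "?P (a, b)" using assms by simp
  then have "?P (SOME z. ?P z)" by (rule someI)
  moreover obtain a' b' where ab: "(SOME z. ?P z) = (a', b')" by fastforce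
  ultimately have b': "b' \<noteq> 0" and e: "Fract a b = Fract a' b'" by auto
  have "a * b' = a' * b" using e eq_fract(1)[OF assms b'] by simp
  then have "pshift a * pshift b' = pshift a' * pshift b" by (metis pshift_mult)
  then have "Fract (pshift a') (pshift b') = Fract (pshift a) (pshift b)"
    using assms b' by (simp add: eq_fract(1))
  then show ?thesis unfolding Fend_def ab by simp
qed

lemma Fend_add: "Fend (x + y) = Fend x + Fend y"
  by (induction x, induction y) (simp add: Fend_Fract pshift_add pshift_mult)

lemma Fend_mult: "Fend (x * y) = Fend x * Fend y"
  by (induction x, induction y) (simp add: Fend_Fract pshift_mult)

lemma Fend_zero: "Fend 0 = 0"
  by (simp add: Zero_fract_def Fend_Fract pshift_zero pshift_one)

lemma Fend_one: "Fend 1 = 1"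
  by (simp add: One_fract_def Fend_Fract pshift_one)

lemma Fend_eq_0_iff [simp]: "Fend x = 0 \<longleftrightarrow> x = 0"
proof (induction x)
  case (Fract a b)
  then show ?case by (simp add: Fend_Fract Zero_fract_def eq_fract)
qed

lemma Fend_inverse: "Fend (inverse x) = inverse (Fend x)"
proof (cases "x = 0")
  case True then show ?thesis by (simp add: Fend_zero)
next
  case False
  have "Fend (inverse x) * Fend x = 1" using False by (simp flip: Fend_mult add: Fend_one)
  then show ?thesis by (metis inverse_unique mult.commute)
qed

lemma Fend_sum: "Fend (sum f A) = (\<Sum>x\<in>A. Fend (f x))"
  by (induction A rule: infinite_finite_induct) (simp_all add: Fend_zero Fend_add)

lemma Fend_prod: "Fend (prod f A) = (\<Prod>x\<in>A. Fend (f x))"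
  by (induction A rule: infinite_finite_induct) (simp_all add: Fend_one Fend_mult)

abbreviation Fpow :: "nat \<Rightarrow> ratfun \<Rightarrow> ratfun" where "Fpow k \<equiv> Fend ^^ k"

lemma Fpow_add: "Fpow k (x + y) = Fpow k x + Fpow k y"
  by (induction k) (simp_all add: Fend_add)

lemma Fpow_mult: "Fpow k (x * y) = Fpow k x * Fpow k y"
  by (induction k) (simp_all add: Fend_mult)

lemma Fpow_zero: "Fpow k 0 = 0"
  by (induction k) (simp_all add: Fend_zero)

lemma Fpow_one: "Fpow k 1 = 1"
  by (induction k) (simp_all add: Fend_one)

lemma Fpow_inverse: "Fpow k (inverse x) = inverse (Fpow k x)"
  by (induction k) (simp_all add: Fend_inverse)

lemma Fpow_sum: "Fpow k (sum f A) = (\<Sum>x\<in>A. Fpow k (f x))"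
  by (induction k) (simp_all add: Fend_sum)

lemma Fpow_prod: "Fpow k (prod f A) = (\<Prod>x\<in>A. Fpow k (f x))"
  by (induction k) (simp_all add: Fend_prod)

lemma Fpow_eq_0_iff [simp]: "Fpow k x = 0 \<longleftrightarrow> x = 0"
  by (induction k) simp_all

lemma rconst_zero: "rconst 0 = 0"
  by (simp add: rconst_def Zero_fract_def)

lemma rconst_one: "rconst 1 = 1"
  by (simp add: rconst_def One_fract_def)

lemma rconst_add: "rconst (a + b) = rconst a + rconst b"
  by (simp add: rconst_def single_add)

lemma rconst_mult: "rconst (a * b) = rconst a * rconst b"
  by (simp add: rconst_def mult_single)

lemma Fpow_rconst: "Fpow k (rconst c) = rconst c"
proof -
  have "Fend (rconst c) = rconst c"
    by (simp add: rconst_def Fend_Fract pshift_single pshift_one mshift_zero)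
  then show ?thesis by (induction k) simp_all
qed

definition var_sum :: "nat set \<Rightarrow> ratfun" where "var_sum A = (\<Sum>i\<in>A. var i)"

lemma Fend_var: "1 \<le> i \<Longrightarrow> Fend (var i) = var (Suc i)"
  by (simp add: var_def Fend_Fract pshift_single pshift_one mshift_single)

lemma Fend_var_sum: "0 \<notin> A \<Longrightarrow> Fend (var_sum A) = var_sum (Suc ` A)"
proof -
  assume A: "0 \<notin> A"
  have "Fend (var_sum A) = (\<Sum>i\<in>A. var (Suc i))"
    unfolding var_sum_def Fend_sum using A by (intro sum.cong refl Fend_var) (metis One_nat_def Suc_leI neq0_conv)
  also have "\<dots> = var_sum (Suc ` A)" unfolding var_sum_def by (simp add: sum.reindex)
  finally show ?thesis .
qed

lemma Fpow_var_sum: "0 \<notin> A \<Longrightarrow> Fpow k (var_sum A) = var_sum ((\<lambda>i. i + k) ` A)"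
proof (induction k)
  case 0 then show ?case by simp
next
  case (Suc k)
  have "0 \<notin> (\<lambda>i. i + k) ` A" using Suc by auto
  then show ?case using Suc by (simp add: Fend_var_sum image_image)
qed

lemma var_sum_nonzero:
  assumes "finite A" "A \<noteq> {}" "0 \<notin> A"
  shows "var_sum A \<noteq> 0"
proof
  assume z: "var_sum A = 0"
  let ?mono = "\<lambda>i. Poly_Mapping.single (i - 1) (1::nat)"
  let ?p = "\<Sum>i\<in>A. Poly_Mapping.single (?mono i) (1::rat)"
  have "var_sum A = Fract ?p 1"
    unfolding var_sum_def var_def
    by (induction A rule: infinite_finite_induct) (simp_all add: Zero_fract_def)
  then have "?p = 0" using z by (simp add: Zero_fract_def eq_fract)
  obtain i0 where i0: "i0 \<in> A" using assms by auto
  have "Poly_Mapping.lookup ?p (?mono i0) = (\<Sum>i\<in>A. if i = i0 then 1 else 0)"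
  proof (unfold lookup_sum, intro sum.cong refl)
    fix i assume "i \<in> A"
    then have "i \<noteq> 0" "i0 \<noteq> 0" using assms i0 by auto
    then have "?mono i = ?mono i0 \<longleftrightarrow> i = i0"
      by (metis diff_Suc_1 lookup_single_eq lookup_single_not_eq not0_implies_Suc zero_neq_one)
    then show "Poly_Mapping.lookup (Poly_Mapping.single (?mono i) 1) (?mono i0) = (if i = i0 then 1 else 0)"
      by (simp add: lookup_single when_def)
  qed
  also have "\<dots> = 1" using i0 assms by simp
  finally show False using \<open>?p = 0\<close> by simp
qed

lemma brk_eq_var_sum: "brk n = var_sum {1..n}"
  by (simp add: brk_def var_sum_def)

lemma Fpow_brk: "Fpow k (brk n) = var_sum {k+1..k+n}"
proof -
  have "(\<lambda>i. i + k) ` {1..n} = {k+1..k+n}"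
    by (auto simp: image_iff)
  then show ?thesis by (simp add: brk_eq_var_sum Fpow_var_sum add.commute)
qed

lemma Fend_brk_add: "Fend (brk c) + Fpow (c + 1) (brk d) = Fend (brk (c + d))"
proof -
  have Fend_brk: "Fend (brk n) = var_sum {2..n+1}" for n
    using Fpow_brk[of 1 n] by (simp add: add.commute numeral_2_eq_2)
  have "{c+1+1..c+1+d} = {c+2..c+d+1}" by auto
  then have "Fpow (c + 1) (brk d) = var_sum {c+2..c+d+1}"
    using Fpow_brk[of "c + 1" d] by (simp only:)
  moreover have "{2..c+1} \<union> {c+2..c+d+1} = {2..c+d+1}" "{2..c+1} \<inter> {c+2..c+d+1} = {}" by auto
  then have "var_sum {2..c+1} + var_sum {c+2..c+d+1} = var_sum {2..c+d+1}"
    unfolding var_sum_def by (metis finite_atLeastAtMost sum.union_disjoint)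
  ultimately show ?thesis by (simp only: Fend_brk add.assoc)
qed

lemma bfact_nonzero: "bfact n \<noteq> 0"
proof (induction n)
  case (Suc n)
  have "brk (Suc n) \<noteq> 0" unfolding brk_eq_var_sum by (rule var_sum_nonzero) auto
  with Suc show ?case by simp
qed simp

section \<open>Weights of sets of positions\<close>

definition wt_set_numer :: "nat set \<Rightarrow> ratfun" where
  "wt_set_numer S = (let L = rev (sorted_list_of_set S); k = length L in
     (\<Prod>j<k. (Fend ^^ (L ! j - 1)) (brk (j + 1))))"

lemma wt_set_eq_numer: "wt_set S = wt_set_numer S / bfact (card S)"
  by (simp add: wt_set_def wt_set_numer_def Let_def length_sorted_list_of_set)

lemma sorted_list_of_set_Suc_image:
  assumes "finite S"
  shows "sorted_list_of_set (Suc ` S) = map Suc (sorted_list_of_set S)"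
proof -
  have "sorted_wrt (<) (map Suc (sorted_list_of_set S))"
    using strict_sorted_list_of_set[of S] by (simp add: sorted_wrt_map)
  moreover have "set (map Suc (sorted_list_of_set S)) = Suc ` S" using assms by simp
  moreover have "length (map Suc (sorted_list_of_set S)) = card (Suc ` S)"
    using assms by (simp add: card_image length_sorted_list_of_set)
  ultimately show ?thesis using sorted_list_of_set_unique[of "Suc ` S"] assms by blast
qed

lemma sorted_list_of_set_insert_min:
  assumes "finite T" "\<forall>i\<in>T. m < i"
  shows "sorted_list_of_set (insert m T) = m # sorted_list_of_set T"
proof -
  have "sorted_wrt (<) (m # sorted_list_of_set T)"
    using strict_sorted_list_of_set[of T] assms by simp
  moreover have "set (m # sorted_list_of_set T) = insert m T" using assms by simp
  moreover have "m \<notin> T" using assms by auto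
  then have "length (m # sorted_list_of_set T) = card (insert m T)"
    using assms by (simp add: length_sorted_list_of_set)
  ultimately show ?thesis using sorted_list_of_set_unique[of "insert m T"] assms by blast
qed

lemma wt_set_numer_Suc_image:
  assumes "finite S" "0 \<notin> S"
  shows "wt_set_numer (Suc ` S) = Fend (wt_set_numer S)"
proof -
  let ?L = "rev (sorted_list_of_set S)"
  have L: "rev (sorted_list_of_set (Suc ` S)) = map Suc ?L"
    using assms by (simp add: sorted_list_of_set_Suc_image rev_map)
  have "wt_set_numer (Suc ` S) = (\<Prod>j<length ?L. Fpow (?L ! j) (brk (j + 1)))"
    unfolding wt_set_numer_def Let_def L by simp
  also have "\<dots> = (\<Prod>j<length ?L. Fend (Fpow (?L ! j - 1) (brk (j + 1))))"
  proof (intro prod.cong refl)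
    fix j assume "j \<in> {..<length ?L}"
    then have "?L ! j \<in> S" using assms by (metis lessThan_iff nth_mem set_rev set_sorted_list_of_set)
    then have "?L ! j = Suc (?L ! j - 1)" using assms by (metis Suc_pred' bot_nat_0.not_eq_extremum)
    then show "Fpow (?L ! j) (brk (j + 1)) = Fend (Fpow (?L ! j - 1) (brk (j + 1)))"
      by (metis funpow.simps(2) o_apply)
  qed
  also have "\<dots> = Fend (wt_set_numer S)" by (simp add: wt_set_numer_def Fend_prod)
  finally show ?thesis .
qed

lemma wt_set_numer_insert_min:
  assumes "finite T" "\<forall>i\<in>T. m < i"
  shows "wt_set_numer (insert m T) = wt_set_numer T * Fpow (m - 1) (brk (card T + 1))"
proof -
  let ?L = "rev (sorted_list_of_set T)"
  have L: "rev (sorted_list_of_set (insert m T)) = ?L @ [m]"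
    unfolding sorted_list_of_set_insert_min[OF assms] by simp
  have len: "length ?L = card T" by (simp add: length_sorted_list_of_set)
  have "wt_set_numer (insert m T) = (\<Prod>j<Suc (length ?L). Fpow ((?L @ [m]) ! j - 1) (brk (j + 1)))"
    unfolding wt_set_numer_def Let_def L by simp
  also have "\<dots> = (\<Prod>j<length ?L. Fpow ((?L @ [m]) ! j - 1) (brk (j + 1))) * Fpow (m - 1) (brk (card T + 1))"
    by (simp only: prod.lessThan_Suc nth_append_length) (simp only: len)
  also have "(\<Prod>j<length ?L. Fpow ((?L @ [m]) ! j - 1) (brk (j + 1))) = wt_set_numer T"
    unfolding wt_set_numer_def Let_def by (intro prod.cong refl) (simp add: nth_append)
  finally show ?thesis .
qed

text \<open>\<open>small_positions k v\<close> is the set \<open>S(w)\<close> of the recursive definition of \<open>wt\<close> for the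
word \<open>w = (k + 1) # v\<close>.\<close>

definition small_positions :: "nat \<Rightarrow> nat list \<Rightarrow> nat set" where
  "small_positions k v = {i. 2 \<le> i \<and> i \<le> length v + 1 \<and> v ! (i - 2) \<le> k}"

lemma small_positions_Nil: "small_positions k [] = {}"
  by (auto simp: small_positions_def)

lemma small_positions_Cons:
  "small_positions k (x # v) =
    (if x \<le> k then insert 2 (Suc ` small_positions k v) else Suc ` small_positions k v)"
proof -
  have "i \<in> small_positions k (x # v) \<longleftrightarrow>
      i \<in> (if x \<le> k then insert 2 (Suc ` small_positions k v) else Suc ` small_positions k v)" for i
  proof (cases "i \<le> 2")
    case True
    then show ?thesis by (auto simp: small_positions_def)
  next
    case False
    then obtain j where j: "i = Suc j" "2 \<le> j" by (metis Suc_pred' less_Suc_eq_le not_le pos2 less_trans)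
    then have "(x # v) ! (i - 2) = v ! (j - 2)" by (simp add: nth_Cons' numeral_2_eq_2)
    moreover have "i \<in> Suc ` small_positions k v \<longleftrightarrow> j \<in> small_positions k v" using j by auto
    ultimately show ?thesis using j False by (auto simp: small_positions_def)
  qed
  then show ?thesis by blast
qed

lemma finite_small_positions: "finite (small_positions k v)"
  by (rule finite_subset[of _ "{2..length v + 1}"]) (auto simp: small_positions_def)

lemma small_positions_ge2: "i \<in> small_positions k v \<Longrightarrow> 2 \<le> i"
  by (simp add: small_positions_def)

lemma card_small_positions: "card (small_positions k v) = length (filter (\<lambda>x. x \<le> k) v)"
proof (induction v)
  case (Cons x v)
  have "2 \<notin> Suc ` small_positions k v" using small_positions_ge2 by fastforce
  then show ?case using Cons by (simp add: small_positions_Cons card_image finite_small_positions)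
qed (simp add: small_positions_Nil)

lemma small_positions_eq_empty:
  assumes "\<forall>y\<in>set v. k < y" shows "small_positions k v = {}"
proof -
  have False if "i \<in> small_positions k v" for i
  proof -
    have "i - 2 < length v" "v ! (i - 2) \<le> k" using that by (auto simp: small_positions_def)
    then show False using assms nth_mem by fastforce
  qed
  then show ?thesis by blast
qed

lemma wt_set_numer_small_positions_Cons:
  "wt_set_numer (small_positions k (x # v)) =
    (if x \<le> k then Fend (brk (card (small_positions k v) + 1)) else 1) *
    Fend (wt_set_numer (small_positions k v))"
proof -
  have above_1: "\<forall>i\<in>Suc ` small_positions k v. 2 < i" "0 \<notin> small_positions k v"
    using small_positions_ge2 by fastforce+
  have "card (Suc ` small_positions k v) = card (small_positions k v)"
    by (simp add: card_image)
  then show ?thesis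
    using above_1
    by (simp add: small_positions_Cons wt_set_numer_insert_min wt_set_numer_Suc_image
        finite_small_positions mult.commute)
qed

lemma wt_set_numer_small_positions:
  assumes "\<forall>x\<in>set a. x \<le> k"
  shows "wt_set_numer (small_positions k a) = Fend (bfact (length a))"
  using assms
proof (induction a)
  case Nil then show ?case by (simp add: small_positions_Nil wt_set_numer_def Fend_one)
next
  case (Cons x a)
  then have "card (small_positions k a) = length a"
    by (simp add: card_small_positions)
  with Cons show ?case by (simp add: wt_set_numer_small_positions_Cons Fend_mult)
qed

lemma shuffles_Nil_right [simp]: "shuffles xs [] = {xs}"
  by (cases xs) simp_all

lemma filter_shuffles_left:
  assumes "\<forall>x\<in>set a. P x" "\<forall>y\<in>set b. \<not> P y" "v \<in> shuffles a b"
  shows "filter P v = a"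
proof -
  have "filter P v \<in> filter P ` shuffles a b" using assms by blast
  also have "\<dots> = shuffles (filter P a) (filter P b)" by (rule filter_shuffles)
  also have "filter P b = []" by (rule filter_False) (use assms(2) in blast)
  also have "filter P a = a" using assms(1) by (simp add: filter_id_conv)
  finally show ?thesis by simp
qed

lemma card_small_positions_shuffle:
  assumes "\<forall>x\<in>set a. x \<le> k" "\<forall>y\<in>set b. k < y" "v \<in> shuffles a b"
  shows "card (small_positions k v) = length a"
  using filter_shuffles_left[OF assms(1) _ assms(3)] assms(2)
  by (simp add: card_small_positions not_le)

lemma sum_shuffles_Cons_Cons_wt_set_numer:
  assumes "\<forall>x\<in>set (x # xs). x \<le> k" "\<forall>y\<in>set (y # ys). k < y"
  shows "(\<Sum>v\<in>shuffles (x # xs) (y # ys). wt_set_numer (small_positions k v)) =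
    Fend (brk (length xs + 1)) * Fend (\<Sum>v\<in>shuffles xs (y # ys). wt_set_numer (small_positions k v)) +
    Fend (\<Sum>v\<in>shuffles (x # xs) ys. wt_set_numer (small_positions k v))"
proof -
  let ?N = "\<lambda>v. wt_set_numer (small_positions k v)"
  have xy: "x \<le> k" "\<not> y \<le> k" using assms by auto
  then have "(#) x ` shuffles xs (y # ys) \<inter> (#) y ` shuffles (x # xs) ys = {}"
    by auto
  then have "(\<Sum>v\<in>shuffles (x # xs) (y # ys). ?N v) =
      (\<Sum>v\<in>shuffles xs (y # ys). ?N (x # v)) + (\<Sum>v\<in>shuffles (x # xs) ys. ?N (y # v))"
    by (simp add: sum.union_disjoint sum.reindex)
  moreover have "?N (x # v) = Fend (brk (length xs + 1)) * Fend (?N v)" if "v \<in> shuffles xs (y # ys)" for v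
    using card_small_positions_shuffle[OF _ _ that] assms xy
    by (simp add: wt_set_numer_small_positions_Cons)
  moreover have "?N (y # v) = Fend (?N v)" for v
    using xy by (simp add: wt_set_numer_small_positions_Cons)
  ultimately show ?thesis by (simp add: sum_distrib_left Fend_sum)
qed

text \<open>The telescoping identity behind the hook length formula: summing \<open>wt(S(w))\<close> over all
shuffles of a word of small letters with a word of large letters.\<close>

lemma sum_shuffles_wt_set_numer:
  assumes "\<forall>x\<in>set a. x \<le> k" "\<forall>y\<in>set b. k < y"
  shows "(\<Sum>v\<in>shuffles a b. wt_set_numer (small_positions k v)) * Fpow (length a + 1) (bfact (length b))
     = Fend (bfact (length a + length b))"
  using assms
proof (induction a b rule: shuffles.induct)
  case (1 ys)
  then show ?case by (simp add: small_positions_eq_empty wt_set_numer_def)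
next
  case (2 xs)
  then show ?case by (simp add: wt_set_numer_small_positions Fpow_one Fend_one)
next
  case (3 x xs y ys)
  let ?S1 = "\<Sum>v\<in>shuffles xs (y # ys). wt_set_numer (small_positions k v)"
  let ?S2 = "\<Sum>v\<in>shuffles (x # xs) ys. wt_set_numer (small_positions k v)"
  let ?c = "length xs + 1" and ?d = "length ys + 1"
  let ?B = "Fend (Fend (bfact (?c + length ys)))"
  have bfact_d: "Fpow (?c + 1) (bfact ?d) = Fpow (?c + 1) (brk ?d) * Fend (Fpow (?c + 1) (bfact (length ys)))"
  proof -
    have "bfact ?d = brk ?d * Fend (bfact (length ys))" by simp
    then show ?thesis by (simp only: Fpow_mult funpow_swap1)
  qed
  have "Fend ?S1 * Fpow (?c + 1) (bfact ?d) = Fend (?S1 * Fpow ?c (bfact ?d))"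
    by (simp add: Fend_mult)
  also have "\<dots> = ?B"
    using "3.IH"(1) "3.prems" by (simp add: add.commute add.left_commute)
  finally have term1: "Fend ?S1 * Fpow (?c + 1) (bfact ?d) = ?B" .
  have "Fend ?S2 * Fend (Fpow (?c + 1) (bfact (length ys))) = Fend (?S2 * Fpow (?c + 1) (bfact (length ys)))"
    by (simp add: Fend_mult)
  also have "\<dots> = ?B"
    using "3.IH"(2) "3.prems" by simp
  finally have term2: "Fend ?S2 * Fend (Fpow (?c + 1) (bfact (length ys))) = ?B" .
  have "(\<Sum>v\<in>shuffles (x # xs) (y # ys). wt_set_numer (small_positions k v)) * Fpow (?c + 1) (bfact ?d)
      = Fend (brk ?c) * (Fend ?S1 * Fpow (?c + 1) (bfact ?d))
        + Fpow (?c + 1) (brk ?d) * (Fend ?S2 * Fend (Fpow (?c + 1) (bfact (length ys))))"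
    unfolding sum_shuffles_Cons_Cons_wt_set_numer[OF "3.prems"] bfact_d by (simp add: algebra_simps)
  also have "\<dots> = Fend (brk ?c) * ?B + Fpow (?c + 1) (brk ?d) * ?B"
    by (simp only: term1 term2)
  also have "\<dots> = ?B * (Fend (brk ?c) + Fpow (?c + 1) (brk ?d))"
    by (simp add: algebra_simps)
  also have "\<dots> = ?B * Fend (brk (?c + ?d))"
    by (simp only: Fend_brk_add)
  also have "\<dots> = Fend (bfact (?c + ?d))"
    by (simp add: Fend_mult mult.commute)
  finally show ?case by simp
qed

section \<open>Linear extensions\<close>

definition respects_order :: "'a rel \<Rightarrow> 'a list \<Rightarrow> bool" where
  "respects_order R w \<longleftrightarrow> sorted_wrt (\<lambda>x y. (y, x) \<notin> R) w"

definition lin_ext :: "'a set \<Rightarrow> 'a rel \<Rightarrow> 'a list set" where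
  "lin_ext X R = {w. distinct w \<and> set w = X \<and> respects_order R w}"

lemma respects_order_Nil [simp]: "respects_order R []"
  by (simp add: respects_order_def)

lemma respects_order_Cons:
  "respects_order R (x # v) \<longleftrightarrow> (\<forall>y\<in>set v. (y, x) \<notin> R) \<and> respects_order R v"
  by (simp add: respects_order_def)

lemma linext_eq_lin_ext: "linext n P = lin_ext {1..n} P"
proof -
  have "(\<forall>p q. p < length w \<and> q < length w \<and> (w ! p, w ! q) \<in> P \<and> w ! p \<noteq> w ! q \<longrightarrow> p < q)
        \<longleftrightarrow> respects_order P w" if d: "distinct w" for w
  proof
    assume H: "\<forall>p q. p < length w \<and> q < length w \<and> (w ! p, w ! q) \<in> P \<and> w ! p \<noteq> w ! q \<longrightarrow> p < q"
    show "respects_order P w" unfolding respects_order_def sorted_wrt_iff_nth_less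
    proof (intro allI impI notI)
      fix i j assume ij: "i < j" "j < length w" and "(w ! j, w ! i) \<in> P"
      moreover have "w ! j \<noteq> w ! i" using d ij by (simp add: nth_eq_iff_index_eq)
      ultimately have "j < i" using H ij by auto
      then show False using ij by simp
    qed
  next
    assume "respects_order P w"
    then have O: "\<And>i j. i < j \<Longrightarrow> j < length w \<Longrightarrow> (w ! j, w ! i) \<notin> P"
      unfolding respects_order_def sorted_wrt_iff_nth_less by blast
    show "\<forall>p q. p < length w \<and> q < length w \<and> (w ! p, w ! q) \<in> P \<and> w ! p \<noteq> w ! q \<longrightarrow> p < q"
    proof (intro allI impI)
      fix p q assume a: "p < length w \<and> q < length w \<and> (w ! p, w ! q) \<in> P \<and> w ! p \<noteq> w ! q"
      then have "p \<noteq> q" by auto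
      moreover have "\<not> q < p" using O[of q p] a by auto
      ultimately show "p < q" by simp
    qed
  qed
  then show ?thesis unfolding linext_def lin_ext_def is_perm_def by auto
qed

lemma finite_lin_ext: "finite X \<Longrightarrow> finite (lin_ext X R)"
  by (rule finite_subset[of _ "{xs. set xs \<subseteq> X \<and> length xs \<le> card X}"])
     (auto simp: lin_ext_def distinct_card[symmetric] intro: finite_lists_length_le)

lemma length_lin_ext: "w \<in> lin_ext X R \<Longrightarrow> length w = card X"
  by (auto simp: lin_ext_def dest: distinct_card[symmetric])

lemma lin_ext_empty: "lin_ext {} R = {[]}"
  by (auto simp: lin_ext_def)

lemma lin_ext_restrict: "lin_ext X R = lin_ext X (R \<inter> X \<times> X)"
proof -
  have "set w \<subseteq> X \<Longrightarrow> respects_order R w \<longleftrightarrow> respects_order (R \<inter> X \<times> X) w" for w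
    unfolding respects_order_def by (induction w) auto
  then show ?thesis unfolding lin_ext_def by auto
qed

lemma respects_order_filter: "respects_order R w \<Longrightarrow> respects_order R (filter P w)"
  unfolding respects_order_def by (rule sorted_wrt_filter)

lemma respects_order_shuffles:
  assumes "respects_order R a" "respects_order R b" "\<forall>x\<in>set a. \<forall>y\<in>set b. (x, y) \<notin> R \<and> (y, x) \<notin> R"
    "v \<in> shuffles a b"
  shows "respects_order R v"
  using assms
proof (induction a b arbitrary: v rule: shuffles.induct)
  case (1 ys) then show ?case by simp
next
  case (2 xs) then show ?case by (simp add: shuffles_Nil_right)
next
  case (3 x xs y ys)
  from "3.prems"(4) consider (l) v' where "v = x # v'" "v' \<in> shuffles xs (y # ys)"
    | (r) v' where "v = y # v'" "v' \<in> shuffles (x # xs) ys" by auto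
  then show ?case
  proof cases
    case l
    have "respects_order R v'" using "3.IH"(1)[of v'] "3.prems" l by (simp add: respects_order_Cons)
    moreover have "\<forall>z\<in>set v'. (z, x) \<notin> R"
      using set_shuffles[OF l(2)] "3.prems" by (auto simp: respects_order_Cons)
    ultimately show ?thesis using l by (simp add: respects_order_Cons)
  next
    case r
    have "respects_order R v'" using "3.IH"(2)[of v'] "3.prems" r by (simp add: respects_order_Cons)
    moreover have "\<forall>z\<in>set v'. (z, y) \<notin> R"
      using set_shuffles[OF r(2)] "3.prems" by (auto simp: respects_order_Cons)
    ultimately show ?thesis using r by (simp add: respects_order_Cons)
  qed
qed

lemma lin_ext_union:
  assumes "A \<inter> B = {}" "\<forall>x\<in>A. \<forall>y\<in>B. (x, y) \<notin> R \<and> (y, x) \<notin> R"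
  shows "lin_ext (A \<union> B) R = (\<Union>a\<in>lin_ext A R. \<Union>b\<in>lin_ext B R. shuffles a b)"
proof
  show "lin_ext (A \<union> B) R \<subseteq> (\<Union>a\<in>lin_ext A R. \<Union>b\<in>lin_ext B R. shuffles a b)"
  proof
    fix w assume w: "w \<in> lin_ext (A \<union> B) R"
    let ?a = "filter (\<lambda>x. x \<in> A) w" and ?b = "filter (\<lambda>x. x \<notin> A) w"
    have w1: "distinct w" "set w = A \<union> B" "respects_order R w" using w by (auto simp: lin_ext_def)
    have "set ?a = A" unfolding set_filter w1(2) by blast
    then have "?a \<in> lin_ext A R" using w1 by (simp add: lin_ext_def respects_order_filter)
    moreover have "set ?b = B" unfolding set_filter w1(2) using assms(1) by blast
    then have "?b \<in> lin_ext B R" using w1 by (simp add: lin_ext_def respects_order_filter)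
    moreover have "w \<in> shuffles ?a ?b" by (rule partition_in_shuffles)
    ultimately show "w \<in> (\<Union>a\<in>lin_ext A R. \<Union>b\<in>lin_ext B R. shuffles a b)" by (intro UN_I)
  qed
next
  show "(\<Union>a\<in>lin_ext A R. \<Union>b\<in>lin_ext B R. shuffles a b) \<subseteq> lin_ext (A \<union> B) R"
  proof (rule subsetI)
    fix v assume "v \<in> (\<Union>a\<in>lin_ext A R. \<Union>b\<in>lin_ext B R. shuffles a b)"
    then obtain a b where a: "a \<in> lin_ext A R" and b: "b \<in> lin_ext B R" and v: "v \<in> shuffles a b" by blast
    have a1: "distinct a" "set a = A" "respects_order R a" using a by (simp_all add: lin_ext_def)
    have b1: "distinct b" "set b = B" "respects_order R b" using b by (simp_all add: lin_ext_def)
    have "distinct v" by (rule distinct_disjoint_shuffles[OF a1(1) b1(1) _ v]) (use assms(1) a1(2) b1(2) in simp)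
    moreover have "set v = A \<union> B" using set_shuffles[OF v] a1(2) b1(2) by simp
    moreover have "respects_order R v" by (rule respects_order_shuffles[OF a1(3) b1(3) _ v]) (use assms(2) a1(2) b1(2) in simp)
    ultimately show "v \<in> lin_ext (A \<union> B) R" by (simp add: lin_ext_def)
  qed
qed

lemma sum_lin_ext_union:
  assumes "finite A" "finite B" "A \<inter> B = {}" "\<forall>x\<in>A. \<forall>y\<in>B. (x, y) \<notin> R \<and> (y, x) \<notin> R"
  shows "(\<Sum>w\<in>lin_ext (A \<union> B) R. f w) = (\<Sum>a\<in>lin_ext A R. \<Sum>b\<in>lin_ext B R. \<Sum>v\<in>shuffles a b. f v)"
proof -
  have key: "a = a' \<and> b = b'" if "a \<in> lin_ext A R" "a' \<in> lin_ext A R" "b \<in> lin_ext B R" "b' \<in> lin_ext B R"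
     "v \<in> shuffles a b" "v \<in> shuffles a' b'" for a a' b b' v
  proof -
    have d1: "set a \<inter> set b = {}" "set a' \<inter> set b' = {}" using that assms(3) by (auto simp: lin_ext_def)
    have sa: "set a = set a'" using that by (simp add: lin_ext_def)
    have "a = filter (\<lambda>x. x \<in> set a) v" using filter_shuffles_disjoint1(1)[OF d1(1) that(5)] by simp
    moreover have "a' = filter (\<lambda>x. x \<in> set a) v" using filter_shuffles_disjoint1(1)[OF d1(2) that(6)] sa by simp
    moreover have "b = filter (\<lambda>x. x \<notin> set a) v" using filter_shuffles_disjoint1(2)[OF d1(1) that(5)] by simp
    moreover have "b' = filter (\<lambda>x. x \<notin> set a) v" using filter_shuffles_disjoint1(2)[OF d1(2) that(6)] sa by simp
    ultimately show ?thesis by simp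
  qed
  have "(\<Sum>w\<in>lin_ext (A \<union> B) R. f w) = (\<Sum>w\<in>(\<Union>a\<in>lin_ext A R. \<Union>b\<in>lin_ext B R. shuffles a b). f w)"
    using lin_ext_union[OF assms(3,4)] by simp
  also have "\<dots> = (\<Sum>a\<in>lin_ext A R. \<Sum>w\<in>(\<Union>b\<in>lin_ext B R. shuffles a b). f w)"
    by (rule sum.UNION_disjoint) (use assms key in \<open>auto simp: finite_lin_ext\<close>)
  also have "\<dots> = (\<Sum>a\<in>lin_ext A R. \<Sum>b\<in>lin_ext B R. \<Sum>v\<in>shuffles a b. f v)"
    by (intro sum.cong refl sum.UNION_disjoint) (use assms key in \<open>auto simp: finite_lin_ext\<close>)
  finally show ?thesis .
qed


lemma respects_order_map:
  "respects_order R (map f w) \<longleftrightarrow> respects_order {(i, j). (f i, f j) \<in> R} w"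
  by (simp add: respects_order_def sorted_wrt_map)

lemma lin_ext_image:
  assumes "inj f"
  shows "lin_ext (f ` X) R = map f ` lin_ext X {(i, j). (f i, f j) \<in> R}"
proof
  show "map f ` lin_ext X {(i, j). (f i, f j) \<in> R} \<subseteq> lin_ext (f ` X) R"
  proof
    fix w assume "w \<in> map f ` lin_ext X {(i, j). (f i, f j) \<in> R}"
    then obtain b where b: "w = map f b" "distinct b" "set b = X" "respects_order {(i, j). (f i, f j) \<in> R} b"
      unfolding lin_ext_def by blast
    have "distinct w" using b(1,2) assms by (simp add: distinct_map inj_on_def)
    moreover have "set w = f ` X" using b(1,3) by simp
    moreover have "respects_order R w" using b(1,4) by (simp only: respects_order_map)
    ultimately show "w \<in> lin_ext (f ` X) R" unfolding lin_ext_def by blast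
  qed
next
  show "lin_ext (f ` X) R \<subseteq> map f ` lin_ext X {(i, j). (f i, f j) \<in> R}"
  proof
    fix w assume "w \<in> lin_ext (f ` X) R"
    then have w: "distinct w" "set w = f ` X" "respects_order R w" unfolding lin_ext_def by blast+
    define b where "b = map (inv f) w"
    have wb: "w = map f b"
      unfolding b_def map_map comp_def using w(2) by (intro map_idI[symmetric]) (auto simp: f_inv_into_f)
    have "distinct b" using w(1) unfolding wb distinct_map by blast
    moreover have "set b = X"
      using w(2) assms unfolding wb list.set_map by (simp add: inj_image_eq_iff)
    moreover have "respects_order {(i, j). (f i, f j) \<in> R} b"
      using w(3) unfolding wb respects_order_map .
    ultimately have "b \<in> lin_ext X {(i, j). (f i, f j) \<in> R}" unfolding lin_ext_def by blast
    then show "w \<in> map f ` lin_ext X {(i, j). (f i, f j) \<in> R}" using wb by blast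
  qed
qed

lemma sum_lin_ext_image:
  assumes "inj f"
  shows "(\<Sum>w\<in>lin_ext (f ` X) R. g w) = (\<Sum>b\<in>lin_ext X {(i, j). (f i, f j) \<in> R}. g (map f b))"
proof -
  have "inj_on (map f) (lin_ext X {(i, j). (f i, f j) \<in> R})"
    using assms by (simp add: inj_on_def inj_map_eq_map)
  from sum.reindex[OF this, of g] show ?thesis
    unfolding lin_ext_image[OF assms] comp_def .
qed

lemma image_add_const_atLeastAtMost: "(\<lambda>x. x + s) ` {a..b} = {a + s..b + (s::nat)}"
proof -
  have "(\<lambda>x. x + s) = (+) s" by (simp add: fun_eq_iff add.commute)
  then show ?thesis by (simp only: image_add_atLeastAtMost)
qed

section \<open>Interval forests\<close>

text \<open>\<open>(i, j) \<in> P\<close> means \<open>i \<le>\<^sub>P j\<close>, so \<open>upset P i\<close> is the subtree \<open>P\<^sub>\<ge>\<^sub>i\<close>. An interval forest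
has only the properties of a recursively labelled forest that the hook length formula needs;
its last condition says that the elements below a given one form a chain.\<close>

definition upset :: "(nat \<times> nat) set \<Rightarrow> nat \<Rightarrow> nat set" where
  "upset P i = {j. (i, j) \<in> P}"

definition interval_forest :: "nat \<Rightarrow> (nat \<times> nat) set \<Rightarrow> bool" where
  "interval_forest n P \<longleftrightarrow> P \<subseteq> {1..n} \<times> {1..n} \<and> (\<forall>i\<in>{1..n}. (i, i) \<in> P) \<and> trans P \<and> antisym P \<and>
     (\<forall>i\<in>{1..n}. \<exists>a b. upset P i = {a..b}) \<and>
     (\<forall>j i1 i2. (i1, j) \<in> P \<longrightarrow> (i2, j) \<in> P \<longrightarrow> (i1, i2) \<in> P \<or> (i2, i1) \<in> P)"

definition roots :: "nat \<Rightarrow> (nat \<times> nat) set \<Rightarrow> nat set" where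
  "roots n P = {r\<in>{1..n}. \<forall>i. (i, r) \<in> P \<longrightarrow> i = r}"

definition hook_prod :: "nat \<Rightarrow> (nat \<times> nat) set \<Rightarrow> ratfun" where
  "hook_prod n P = (\<Prod>i\<in>{1..n}. inverse (var_sum (upset P i)))"

lemma interval_forestD:
  assumes "interval_forest n P"
  shows "\<And>i j. (i, j) \<in> P \<Longrightarrow> i \<in> {1..n} \<and> j \<in> {1..n}"
    and "\<And>i. i \<in> {1..n} \<Longrightarrow> (i, i) \<in> P"
    and "\<And>i j k. (i, j) \<in> P \<Longrightarrow> (j, k) \<in> P \<Longrightarrow> (i, k) \<in> P"
    and "\<And>i j. (i, j) \<in> P \<Longrightarrow> (j, i) \<in> P \<Longrightarrow> i = j"
    and "\<And>i. i \<in> {1..n} \<Longrightarrow> \<exists>a b. upset P i = {a..b}"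
    and "\<And>j i1 i2. (i1, j) \<in> P \<Longrightarrow> (i2, j) \<in> P \<Longrightarrow> (i1, i2) \<in> P \<or> (i2, i1) \<in> P"
proof -
  note F = assms[unfolded interval_forest_def]
  show "\<And>i j. (i, j) \<in> P \<Longrightarrow> i \<in> {1..n} \<and> j \<in> {1..n}"
    and "\<And>i. i \<in> {1..n} \<Longrightarrow> (i, i) \<in> P"
    and "\<And>i. i \<in> {1..n} \<Longrightarrow> \<exists>a b. upset P i = {a..b}"
    and "\<And>j i1 i2. (i1, j) \<in> P \<Longrightarrow> (i2, j) \<in> P \<Longrightarrow> (i1, i2) \<in> P \<or> (i2, i1) \<in> P"
    using F by blast+
  show "\<And>i j k. (i, j) \<in> P \<Longrightarrow> (j, k) \<in> P \<Longrightarrow> (i, k) \<in> P"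
    using F by (meson transD)
  show "\<And>i j. (i, j) \<in> P \<Longrightarrow> (j, i) \<in> P \<Longrightarrow> i = j"
    using F by (meson antisymD)
qed

lemma upset_convex:
  assumes "interval_forest n P" "i \<in> {1..n}" "x \<in> upset P i" "y \<in> upset P i" "x \<le> z" "z \<le> y"
  shows "z \<in> upset P i"
proof -
  obtain a b where ab: "upset P i = {a..b}" using interval_forestD(5)[OF assms(1,2)] by blast
  show ?thesis using assms(3-6) unfolding ab by simp
qed

lemma self_in_upset: "interval_forest n P \<Longrightarrow> i \<in> {1..n} \<Longrightarrow> i \<in> upset P i"
  by (simp add: upset_def interval_forestD(2))

lemma upset_subset: "interval_forest n P \<Longrightarrow> upset P i \<subseteq> {1..n}"
  unfolding upset_def using interval_forestD(1) by blast

lemma upset_below_root: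
  assumes g: "interval_forest n P" and r: "r \<in> roots n P" and i: "i \<in> {1..n}" "i < r"
  shows "upset P i \<subseteq> {1..r - 1}"
proof
  fix j assume j: "j \<in> upset P i"
  have j1: "j \<in> {1..n}" using upset_subset[OF g] j by blast
  have "j < r"
  proof (rule ccontr)
    assume "\<not> j < r"
    then have "r \<in> upset P i" using upset_convex[OF g i(1) self_in_upset[OF g i(1)] j] i(2) by simp
    then have "(i, r) \<in> P" by (simp add: upset_def)
    then have "i = r" using r by (simp add: roots_def)
    then show False using i(2) by simp
  qed
  then show "j \<in> {1..r - 1}" using j1 by simp
qed

lemma upset_above_root:
  assumes g: "interval_forest n P" and r: "r \<in> roots n P" and i: "i \<in> {1..n}" "r < i"
  shows "upset P i \<subseteq> {r + 1..n}"
proof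
  fix j assume j: "j \<in> upset P i"
  have j1: "j \<in> {1..n}" using upset_subset[OF g] j by blast
  have "r < j"
  proof (rule ccontr)
    assume "\<not> r < j"
    then have "r \<in> upset P i" using upset_convex[OF g i(1) j self_in_upset[OF g i(1)]] i(2) by simp
    then have "(i, r) \<in> P" by (simp add: upset_def)
    then have "i = r" using r by (simp add: roots_def)
    then show False using i(2) by simp
  qed
  then show "j \<in> {r + 1..n}" using j1 by simp
qed

lemma incomparable_across_root:
  assumes g: "interval_forest n P" and r: "r \<in> roots n P"
  shows "\<forall>x\<in>{1..r - 1}. \<forall>y\<in>{r + 1..n}. (x, y) \<notin> P \<and> (y, x) \<notin> P"
proof (intro ballI conjI)
  fix x y assume x: "x \<in> {1..r - 1}" and y: "y \<in> {r + 1..n}"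
  have rn: "r \<in> {1..n}" using r by (simp add: roots_def)
  have x1: "x \<in> {1..n}" "x < r" using x rn by auto
  have y1: "y \<in> {1..n}" "r < y" using y by auto
  show "(x, y) \<notin> P"
  proof
    assume "(x, y) \<in> P"
    then have "y \<in> upset P x" by (simp add: upset_def)
    then show False using upset_below_root[OF g r x1] y1 by auto
  qed
  show "(y, x) \<notin> P"
  proof
    assume "(y, x) \<in> P"
    then have "x \<in> upset P y" by (simp add: upset_def)
    then show False using upset_above_root[OF g r y1] x1 by auto
  qed
qed

lemma image_add_const_eq_atLeastAtMost:
  fixes A :: "nat set"
  assumes "(\<lambda>x. x + s) ` A = {a..b}" "s \<le> a" "s \<le> b"
  shows "A = {a - s..b - s}"
proof
  show "A \<subseteq> {a - s..b - s}"
  proof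
    fix x assume "x \<in> A"
    then have "x + s \<in> {a..b}" using assms(1) by blast
    then show "x \<in> {a - s..b - s}" by auto
  qed
  show "{a - s..b - s} \<subseteq> A"
  proof
    fix x assume "x \<in> {a - s..b - s}"
    then have "x + s \<in> (\<lambda>x. x + s) ` A" using assms by auto
    then show "x \<in> A" by auto
  qed
qed

definition left_part :: "nat \<Rightarrow> (nat \<times> nat) set \<Rightarrow> (nat \<times> nat) set" where
  "left_part k P = P \<inter> {1..k} \<times> {1..k}"

definition right_part :: "nat \<Rightarrow> nat \<Rightarrow> (nat \<times> nat) set \<Rightarrow> (nat \<times> nat) set" where
  "right_part s l P = {(i, j). (i + s, j + s) \<in> P} \<inter> {1..l} \<times> {1..l}"

lemma upset_left_part:
  assumes "upset P i \<subseteq> {1..k}"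
  shows "upset (left_part k P) i = (if i \<in> {1..k} then upset P i else {})"
  using assms by (auto simp: upset_def left_part_def)

lemma upset_right_part:
  assumes "upset P (i + s) \<subseteq> {s + 1..s + l}" "i \<in> {1..l}"
  shows "(\<lambda>x. x + s) ` upset (right_part s l P) i = upset P (i + s)"
proof
  show "(\<lambda>x. x + s) ` upset (right_part s l P) i \<subseteq> upset P (i + s)"
    by (auto simp: upset_def right_part_def)
next
  show "upset P (i + s) \<subseteq> (\<lambda>x. x + s) ` upset (right_part s l P) i"
  proof
    fix j assume j: "j \<in> upset P (i + s)"
    then have j1: "j \<in> {s + 1..s + l}" using assms(1) by blast
    then have "j - s \<in> upset (right_part s l P) i" using j assms(2) by (auto simp: upset_def right_part_def)
    moreover have "j = j - s + s" using j1 by simp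
    ultimately show "j \<in> (\<lambda>x. x + s) ` upset (right_part s l P) i" by (rule rev_image_eqI)
  qed
qed

lemma interval_forest_left_part:
  assumes g: "interval_forest n P" and r: "r \<in> roots n P"
  shows "interval_forest (r - 1) (left_part (r - 1) P)"
proof -
  let ?k = "r - 1"
  have rn: "r \<in> {1..n}" using r by (simp add: roots_def)
  have sub: "upset P i \<subseteq> {1..?k}" if "i \<in> {1..?k}" for i
  proof -
    have h: "i \<in> {1..n}" "i < r" using that rn by auto
    show ?thesis using upset_below_root[OF g r h] .
  qed
  have 1: "left_part ?k P \<subseteq> {1..?k} \<times> {1..?k}" by (auto simp: left_part_def)
  have 2: "\<forall>i\<in>{1..?k}. (i, i) \<in> left_part ?k P" using interval_forestD(2)[OF g] rn by (auto simp: left_part_def)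
  have 3: "trans (left_part ?k P)" unfolding trans_def left_part_def using interval_forestD(3)[OF g] by blast
  have 4: "antisym (left_part ?k P)" unfolding antisym_def left_part_def using interval_forestD(4)[OF g] by blast
  have 5: "\<forall>i\<in>{1..?k}. \<exists>a b. upset (left_part ?k P) i = {a..b}"
  proof
    fix i assume i: "i \<in> {1..?k}"
    then have "i \<in> {1..n}" using rn by auto
    then show "\<exists>a b. upset (left_part ?k P) i = {a..b}" using interval_forestD(5)[OF g] upset_left_part[OF sub[OF i]] i by simp
  qed
  have 6: "\<forall>j i1 i2. (i1, j) \<in> left_part ?k P \<longrightarrow> (i2, j) \<in> left_part ?k P \<longrightarrow> (i1, i2) \<in> left_part ?k P \<or> (i2, i1) \<in> left_part ?k P"
    unfolding left_part_def using interval_forestD(6)[OF g] by blast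
  show ?thesis unfolding interval_forest_def using 1 2 3 4 5 6 by blast
qed

lemma interval_forest_right_part:
  assumes g: "interval_forest n P" and r: "r \<in> roots n P"
  shows "interval_forest (n - r) (right_part r (n - r) P)"
proof -
  let ?l = "n - r"
  have rn: "r \<in> {1..n}" using r by (simp add: roots_def)
  have sub: "upset P (i + r) \<subseteq> {r + 1..r + ?l}" if "i \<in> {1..?l}" for i
  proof -
    have h: "i + r \<in> {1..n}" "r < i + r" using that rn by auto
    have "r + ?l = n" using rn by simp
    then show ?thesis using upset_above_root[OF g r h] by simp
  qed
  have 1: "right_part r ?l P \<subseteq> {1..?l} \<times> {1..?l}" by (auto simp: right_part_def)
  have 2: "\<forall>i\<in>{1..?l}. (i, i) \<in> right_part r ?l P" using interval_forestD(2)[OF g] rn by (auto simp: right_part_def)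
  have 3: "trans (right_part r ?l P)" unfolding trans_def right_part_def using interval_forestD(3)[OF g] by blast
  have 4: "antisym (right_part r ?l P)" unfolding antisym_def right_part_def using interval_forestD(4)[OF g] by fastforce
  have 5: "\<forall>i\<in>{1..?l}. \<exists>a b. upset (right_part r ?l P) i = {a..b}"
  proof
    fix i assume i: "i \<in> {1..?l}"
    then have i1: "i + r \<in> {1..n}" using rn by auto
    obtain a b where ab: "upset P (i + r) = {a..b}" using interval_forestD(5)[OF g i1] by blast
    have "i + r \<in> {a..b}" using self_in_upset[OF g i1] ab by simp
    then have "r \<le> a" "r \<le> b" using sub[OF i] ab by auto
    moreover have "(\<lambda>x. x + r) ` upset (right_part r ?l P) i = {a..b}"
      using upset_right_part[OF sub[OF i] i] ab by simp
    ultimately show "\<exists>a b. upset (right_part r ?l P) i = {a..b}"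
      using image_add_const_eq_atLeastAtMost by blast
  qed
  have 6: "\<forall>j i1 i2. (i1, j) \<in> right_part r ?l P \<longrightarrow> (i2, j) \<in> right_part r ?l P \<longrightarrow> (i1, i2) \<in> right_part r ?l P \<or> (i2, i1) \<in> right_part r ?l P"
    unfolding right_part_def using interval_forestD(6)[OF g] by blast
  show ?thesis unfolding interval_forest_def using 1 2 3 4 5 6 by blast
qed

lemma card_below_less:
  assumes "finite {x. (x, j) \<in> P}" "trans P" "antisym P" "(j, j) \<in> P" "(c, j) \<in> P" "c \<noteq> j"
  shows "card {x. (x, c) \<in> P} < card {x. (x, j) \<in> P}"
proof (rule psubset_card_mono[OF assms(1)])
  have "{x. (x, c) \<in> P} \<subseteq> {x. (x, j) \<in> P}" using transD[OF assms(2) _ assms(5)] by blast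
  moreover have "j \<notin> {x. (x, c) \<in> P}" using antisymD[OF assms(3) assms(5)] assms(6) by blast
  ultimately show "{x. (x, c) \<in> P} \<subset> {x. (x, j) \<in> P}" using assms(4) by blast
qed

lemma finite_below_interval_forest:
  assumes "interval_forest n P" shows "finite {x. (x, j) \<in> P}"
  by (rule finite_subset[of _ "{1..n}"]) (use interval_forestD(1)[OF assms] in auto)

lemma exists_root_below:
  assumes g: "interval_forest n P"
  shows "j \<in> {1..n} \<Longrightarrow> \<exists>r\<in>roots n P. (r, j) \<in> P"
proof (induction "card {x. (x, j) \<in> P}" arbitrary: j rule: less_induct)
  case less
  show ?case
  proof (cases "j \<in> roots n P")
    case True
    then show ?thesis using interval_forestD(2)[OF g less.prems] by blast
  next
    case False
    then obtain i where i: "(i, j) \<in> P" "i \<noteq> j" using less.prems by (auto simp: roots_def)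
    have "trans P" "antisym P" using g by (simp_all add: interval_forest_def)
    then have "card {x. (x, i) \<in> P} < card {x. (x, j) \<in> P}"
      using finite_below_interval_forest[OF g] interval_forestD(2)[OF g less.prems] i
      by (intro card_below_less)
    moreover have "i \<in> {1..n}" using interval_forestD(1)[OF g i(1)] by blast
    ultimately obtain r where "r \<in> roots n P" "(r, i) \<in> P" using less.hyps by blast
    then show ?thesis using interval_forestD(3)[OF g _ i(1)] by blast
  qed
qed

lemma root_unique:
  assumes g: "interval_forest n P" and "r1 \<in> roots n P" "r2 \<in> roots n P" "(r1, j) \<in> P" "(r2, j) \<in> P"
  shows "r1 = r2"
  using interval_forestD(6)[OF g assms(4,5)] assms(2,3) by (auto simp: roots_def)

lemma finite_roots: "finite (roots n P)"
  by (rule finite_subset[of _ "{1..n}"]) (auto simp: roots_def)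

lemma sum_var_sum_upset_roots:
  assumes g: "interval_forest n P"
  shows "(\<Sum>r\<in>roots n P. var_sum (upset P r)) = brk n"
proof -
  have cover: "(\<Union>r\<in>roots n P. upset P r) = {1..n}"
  proof
    show "(\<Union>r\<in>roots n P. upset P r) \<subseteq> {1..n}" using upset_subset[OF g] by blast
    show "{1..n} \<subseteq> (\<Union>r\<in>roots n P. upset P r)"
    proof
      fix j assume "j \<in> {1..n}"
      then obtain r where "r \<in> roots n P" "(r, j) \<in> P" using exists_root_below[OF g] by blast
      then show "j \<in> (\<Union>r\<in>roots n P. upset P r)" by (auto simp: upset_def)
    qed
  qed
  have "(\<Sum>r\<in>roots n P. var_sum (upset P r)) = (\<Sum>r\<in>roots n P. \<Sum>i\<in>upset P r. var i)"
    by (simp add: var_sum_def)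
  also have "\<dots> = (\<Sum>i\<in>(\<Union>r\<in>roots n P. upset P r). var i)"
  proof (rule sum.UNION_disjoint[symmetric])
    show "finite (roots n P)" by (rule finite_roots)
    show "\<forall>r\<in>roots n P. finite (upset P r)" using upset_subset[OF g] by (meson finite_atLeastAtMost finite_subset)
    show "\<forall>r1\<in>roots n P. \<forall>r2\<in>roots n P. r1 \<noteq> r2 \<longrightarrow> upset P r1 \<inter> upset P r2 = {}"
      using root_unique[OF g] by (auto simp: upset_def)
  qed
  also have "\<dots> = brk n" unfolding cover by (simp add: brk_def)
  finally show ?thesis .
qed





lemma var_sum_upset_nonzero: "interval_forest n P \<Longrightarrow> i \<in> {1..n} \<Longrightarrow> var_sum (upset P i) \<noteq> 0"
proof -
  assume g: "interval_forest n P" and i: "i \<in> {1..n}"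
  have "finite (upset P i)" using upset_subset[OF g] by (meson finite_atLeastAtMost finite_subset)
  moreover have "upset P i \<noteq> {}" using self_in_upset[OF g i] by blast
  moreover have "0 \<notin> upset P i" using upset_subset[OF g] by fastforce
  ultimately show ?thesis by (rule var_sum_nonzero)
qed

lemma Fpow_hook_prod:
  assumes "interval_forest m Q"
    and "\<And>i. i \<in> {1..m} \<Longrightarrow> upset R (i + s) = (\<lambda>x. x + s) ` upset Q i"
  shows "Fpow s (hook_prod m Q) = (\<Prod>i\<in>{s + 1..s + m}. inverse (var_sum (upset R i)))"
proof -
  have "Fpow s (hook_prod m Q) = (\<Prod>i\<in>{1..m}. inverse (Fpow s (var_sum (upset Q i))))"
    by (simp add: hook_prod_def Fpow_prod Fpow_inverse)
  also have "\<dots> = (\<Prod>i\<in>{1..m}. inverse (var_sum (upset R (i + s))))"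
  proof (intro prod.cong refl)
    fix i assume i: "i \<in> {1..m}"
    have "0 \<notin> upset Q i" using upset_subset[OF assms(1)] by fastforce
    then show "inverse (Fpow s (var_sum (upset Q i))) = inverse (var_sum (upset R (i + s)))"
      using assms(2)[OF i] by (simp add: Fpow_var_sum)
  qed
  also have "\<dots> = (\<Prod>i\<in>(\<lambda>i. i + s) ` {1..m}. inverse (var_sum (upset R i)))"
    by (rule prod.reindex[symmetric, unfolded comp_def]) (simp add: inj_on_def)
  also have "(\<lambda>i. i + s) ` {1..m} = {s + 1..s + m}"
    by (simp add: image_add_const_atLeastAtMost add.commute)
  finally show ?thesis .
qed

lemma hook_prod_split:
  assumes g: "interval_forest n P" and r: "r \<in> roots n P"
  shows "hook_prod n P * var_sum (upset P r) = hook_prod (r - 1) (left_part (r - 1) P) * Fpow r (hook_prod (n - r) (right_part r (n - r) P))"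
proof -
  let ?k = "r - 1" and ?l = "n - r"
  let ?f = "\<lambda>i. inverse (var_sum (upset P i))"
  have rn: "r \<in> {1..n}" using r by (simp add: roots_def)
  have split: "{1..n} = insert r ({1..?k} \<union> {r + 1..n})" using rn by auto
  have A: "(\<Prod>i\<in>{1..?k}. ?f i) = hook_prod ?k (left_part ?k P)"
    unfolding hook_prod_def
  proof (intro prod.cong refl)
    fix i assume i: "i \<in> {1..?k}"
    have h: "i \<in> {1..n}" "i < r" using i rn by auto
    show "?f i = inverse (var_sum (upset (left_part ?k P) i))" using upset_left_part[OF upset_below_root[OF g r h]] i by simp
  qed
  have B: "Fpow r (hook_prod ?l (right_part r ?l P)) = (\<Prod>i\<in>{r + 1..n}. ?f i)"
  proof -
    have "upset P (i + r) = (\<lambda>x. x + r) ` upset (right_part r ?l P) i" if i: "i \<in> {1..?l}" for i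
    proof -
      have h: "i + r \<in> {1..n}" "r < i + r" using i rn by auto
      have "r + ?l = n" using rn by simp
      then have "upset P (i + r) \<subseteq> {r + 1..r + ?l}" using upset_above_root[OF g r h] by simp
      then show ?thesis using upset_right_part[OF _ i] by simp
    qed
    from Fpow_hook_prod[OF interval_forest_right_part[OF g r] this] show ?thesis
      using rn by simp
  qed
  have "hook_prod n P = ?f r * ((\<Prod>i\<in>{1..?k}. ?f i) * (\<Prod>i\<in>{r + 1..n}. ?f i))"
    unfolding hook_prod_def split by (subst prod.insert) (auto simp: prod.union_disjoint)
  then have "hook_prod n P = ?f r * (hook_prod ?k (left_part ?k P) * Fpow r (hook_prod ?l (right_part r ?l P)))"
    by (simp only: A B)
  moreover have "?f r * var_sum (upset P r) = 1" using var_sum_upset_nonzero[OF g rn] by simp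
  ultimately show ?thesis by (simp add: algebra_simps)
qed

lemma lin_ext_roots:
  assumes g: "interval_forest n P" and n: "1 \<le> n"
  shows "lin_ext {1..n} P = (\<Union>r\<in>roots n P. Cons r ` lin_ext ({1..n} - {r}) P)"
proof
  show "lin_ext {1..n} P \<subseteq> (\<Union>r\<in>roots n P. Cons r ` lin_ext ({1..n} - {r}) P)"
  proof
    fix w assume w: "w \<in> lin_ext {1..n} P"
    then obtain r v where rv: "w = r # v" using n by (cases w) (auto simp: lin_ext_def)
    with w have r: "r \<in> {1..n}" and v: "v \<in> lin_ext ({1..n} - {r}) P"
      and below: "\<forall>y\<in>set v. (y, r) \<notin> P"
      by (auto simp: lin_ext_def respects_order_Cons)
    have "i = r" if "(i, r) \<in> P" for i
    proof (rule ccontr)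
      assume "i \<noteq> r"
      moreover have "i \<in> {1..n}" using interval_forestD(1)[OF g that] by blast
      ultimately have "i \<in> set v" using v by (simp add: lin_ext_def)
      then show False using below that by blast
    qed
    then have "r \<in> roots n P" using r by (simp add: roots_def)
    then show "w \<in> (\<Union>r\<in>roots n P. Cons r ` lin_ext ({1..n} - {r}) P)" using rv v by blast
  qed
next
  show "(\<Union>r\<in>roots n P. Cons r ` lin_ext ({1..n} - {r}) P) \<subseteq> lin_ext {1..n} P"
  proof
    fix w assume "w \<in> (\<Union>r\<in>roots n P. Cons r ` lin_ext ({1..n} - {r}) P)"
    then obtain r v where r: "r \<in> roots n P" and v: "v \<in> lin_ext ({1..n} - {r}) P" and w: "w = r # v"
      by blast
    have "r \<in> {1..n}" using r by (simp add: roots_def)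
    moreover have "\<forall>y\<in>set v. (y, r) \<notin> P" using r v unfolding roots_def lin_ext_def by blast
    ultimately show "w \<in> lin_ext {1..n} P"
      using v w by (auto simp: lin_ext_def respects_order_Cons)
  qed
qed

lemma sum_Cons_image: "(\<Sum>w\<in>Cons r ` L. f w) = (\<Sum>v\<in>L. f (r # v))"
proof -
  have "inj_on (Cons r) L" by (simp add: inj_on_def)
  from sum.reindex[OF this, where g=f] show ?thesis by (simp add: comp_def)
qed

lemma sum_lin_ext_roots:
  assumes g: "interval_forest n P" and n: "1 \<le> n"
  shows "(\<Sum>w\<in>lin_ext {1..n} P. f w) = (\<Sum>r\<in>roots n P. \<Sum>v\<in>lin_ext ({1..n} - {r}) P. f (r # v))"
proof -
  have "(\<Sum>w\<in>lin_ext {1..n} P. f w) = (\<Sum>w\<in>(\<Union>r\<in>roots n P. Cons r ` lin_ext ({1..n} - {r}) P). f w)"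
    by (simp only: lin_ext_roots[OF g n])
  also have "\<dots> = (\<Sum>r\<in>roots n P. \<Sum>w\<in>Cons r ` lin_ext ({1..n} - {r}) P. f w)"
    by (rule sum.UNION_disjoint) (auto simp: finite_roots finite_lin_ext)
  also have "\<dots> = (\<Sum>r\<in>roots n P. \<Sum>v\<in>lin_ext ({1..n} - {r}) P. f (r # v))"
    by (simp only: sum_Cons_image)
  finally show ?thesis .
qed

section \<open>The hook length formula\<close>

declare wt.simps(2) [simp del]

lemma wt_Cons_shuffle:
  assumes r: "1 \<le> r" and a: "\<forall>x\<in>set a. x \<le> r - 1" and b: "\<forall>y\<in>set b. r < y"
    and v: "v \<in> shuffles a b"
  shows "wt (r # v) = wt_set (small_positions (r - 1) v) * wt a * Fpow r (wt (map (\<lambda>x. x - r) b))"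
proof -
  let ?k = "r - 1"
  have S: "{i. 1 \<le> i \<and> i \<le> length (r # v) \<and> (r # v) ! (i - 1) \<le> ?k} = small_positions ?k v"
  proof (rule set_eqI)
    fix i
    show "i \<in> {i. 1 \<le> i \<and> i \<le> length (r # v) \<and> (r # v) ! (i - 1) \<le> ?k} \<longleftrightarrow> i \<in> small_positions ?k v"
    proof (cases "i \<le> 1")
      case True
      then show ?thesis using r by (auto simp: small_positions_def)
    next
      case False
      then have "(r # v) ! (i - 1) = v ! (i - 2)" by (simp add: nth_Cons' numeral_2_eq_2)
      then show ?thesis using False by (auto simp: small_positions_def)
    qed
  qed
  have fa: "filter (\<lambda>x. x \<le> ?k) v = a"
    by (rule filter_shuffles_left[OF _ _ v]) (use a b in auto)
  have fb: "filter (\<lambda>x. ?k + 1 < x) v = b"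
  proof (rule filter_shuffles_left)
    show "v \<in> shuffles b a" using v by (simp add: shuffles_commutes)
    show "\<forall>x\<in>set b. ?k + 1 < x" using b r by simp
    show "\<forall>y\<in>set a. \<not> ?k + 1 < y" using a r by auto
  qed
  have e: "?k + 1 = r" using r by simp
  have fb': "filter ((<) r) v = b" using fb e by simp
  have m: "map (\<lambda>x. x - ?k - 1) b = map (\<lambda>x. x - r) b" using r by simp
  show ?thesis
    by (simp only: wt.simps(2) Let_def S fa e fb' m)
qed

lemma sum_shuffles_wt_Cons:
  assumes r: "1 \<le> r" and a: "a \<in> lin_ext {1..r - 1} P" and b: "b \<in> lin_ext {r + 1..r + l} P"
  shows "(\<Sum>v\<in>shuffles a b. wt (r # v)) * (bfact (r - 1) * Fpow r (bfact l)) =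
    wt a * Fpow r (wt (map (\<lambda>x. x - r) b)) * Fend (bfact (r - 1 + l))"
proof -
  let ?k = "r - 1" and ?W = "wt a * Fpow r (wt (map (\<lambda>x. x - r) b))"
  have "set a = {1..?k}" "set b = {r + 1..r + l}" using a b by (simp_all add: lin_ext_def)
  then have la: "length a = ?k" and lb: "length b = l"
    and small: "\<forall>x\<in>set a. x \<le> ?k" and large: "\<forall>y\<in>set b. ?k < y" "\<forall>y\<in>set b. r < y"
    using length_lin_ext[OF a] length_lin_ext[OF b] by auto
  have "wt (r # v) * bfact ?k = wt_set_numer (small_positions ?k v) * ?W" if v: "v \<in> shuffles a b" for v
    using wt_Cons_shuffle[OF r small large(2) v] card_small_positions_shuffle[OF small large(1) v] la
    by (simp add: wt_set_eq_numer bfact_nonzero)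
  then have wt_sum: "(\<Sum>v\<in>shuffles a b. wt (r # v)) * bfact ?k =
      (\<Sum>v\<in>shuffles a b. wt_set_numer (small_positions ?k v)) * ?W"
    by (simp add: sum_distrib_right)
  have numer_sum: "(\<Sum>v\<in>shuffles a b. wt_set_numer (small_positions ?k v)) * Fpow r (bfact l) =
      Fend (bfact (?k + l))"
    using sum_shuffles_wt_set_numer[OF small large(1)] la lb r by simp
  have "(\<Sum>v\<in>shuffles a b. wt (r # v)) * (bfact ?k * Fpow r (bfact l)) =
      ((\<Sum>v\<in>shuffles a b. wt (r # v)) * bfact ?k) * Fpow r (bfact l)"
    by (simp only: mult.assoc)
  also have "\<dots> = ?W * ((\<Sum>v\<in>shuffles a b. wt_set_numer (small_positions ?k v)) * Fpow r (bfact l))"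
    unfolding wt_sum by (simp only: mult_ac)
  finally show ?thesis unfolding numer_sum .
qed

lemma sum_wt_lin_ext_shift:
  "(\<Sum>b\<in>lin_ext {r + 1..r + l} P. wt (map (\<lambda>x. x - r) b)) = (\<Sum>b\<in>lin_ext {1..l} (right_part r l P). wt b)"
proof -
  have "inj (\<lambda>x::nat. x + r)" by (simp add: inj_on_def)
  moreover have "(\<lambda>x. x + r) ` {1..l} = {r + 1..r + l}"
    by (simp add: image_add_const_atLeastAtMost add.commute)
  moreover have "map (\<lambda>x. x - r) (map (\<lambda>x. x + r) b) = b" for b
    by (simp add: comp_def)
  ultimately have "(\<Sum>b\<in>lin_ext {r + 1..r + l} P. wt (map (\<lambda>x. x - r) b)) =
      (\<Sum>b\<in>lin_ext {1..l} {(i, j). (i + r, j + r) \<in> P}. wt b)"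
    using sum_lin_ext_image[where f = "\<lambda>x. x + r" and X = "{1..l}" and R = P
        and g = "\<lambda>b. wt (map (\<lambda>x. x - r) b)"]
    by (simp only:)
  also have "\<dots> = (\<Sum>b\<in>lin_ext {1..l} (right_part r l P). wt b)"
    unfolding right_part_def by (simp only: lin_ext_restrict[of "{1..l}" "{(i, j). (i + r, j + r) \<in> P}"])
  finally show ?thesis .
qed

lemma sum_wt_lin_ext_root_first:
  assumes g: "interval_forest n P" and r: "r \<in> roots n P"
    and left: "(\<Sum>a\<in>lin_ext {1..r - 1} (left_part (r - 1) P). wt a) =
      bfact (r - 1) * hook_prod (r - 1) (left_part (r - 1) P)"
    and right: "(\<Sum>b\<in>lin_ext {1..n - r} (right_part r (n - r) P). wt b) =
      bfact (n - r) * hook_prod (n - r) (right_part r (n - r) P)"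
  shows "(\<Sum>v\<in>lin_ext ({1..n} - {r}) P. wt (r # v)) = hook_prod n P * var_sum (upset P r) * Fend (bfact (n - 1))"
proof -
  let ?k = "r - 1" and ?l = "n - r"
  let ?L = "lin_ext {1..?k} P" and ?R = "lin_ext {r + 1..r + ?l} P"
  let ?D = "bfact ?k * Fpow r (bfact ?l)"
  have rn: "r \<in> {1..n}" using r by (simp add: roots_def)
  have "{1..n} - {r} = {1..?k} \<union> {r + 1..r + ?l}" using rn by auto
  moreover have "\<forall>x\<in>{1..?k}. \<forall>y\<in>{r + 1..r + ?l}. (x, y) \<notin> P \<and> (y, x) \<notin> P"
    using incomparable_across_root[OF g r] rn by simp
  ultimately have "(\<Sum>v\<in>lin_ext ({1..n} - {r}) P. wt (r # v)) * ?D =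
      (\<Sum>a\<in>?L. \<Sum>b\<in>?R. (\<Sum>v\<in>shuffles a b. wt (r # v)) * ?D)"
    by (simp add: sum_lin_ext_union sum_distrib_right)
  also have "\<dots> = (\<Sum>a\<in>?L. \<Sum>b\<in>?R. wt a * Fpow r (wt (map (\<lambda>x. x - r) b)) * Fend (bfact (n - 1)))"
  proof (intro sum.cong refl)
    fix a b assume "a \<in> ?L" "b \<in> ?R"
    moreover have "1 \<le> r" "r - 1 + ?l = n - 1" using rn by simp_all
    ultimately show "(\<Sum>v\<in>shuffles a b. wt (r # v)) * ?D =
        wt a * Fpow r (wt (map (\<lambda>x. x - r) b)) * Fend (bfact (n - 1))"
      using sum_shuffles_wt_Cons[of r a P b ?l] by (simp only:)
  qed
  also have "\<dots> = (\<Sum>a\<in>?L. wt a) * Fpow r (\<Sum>b\<in>?R. wt (map (\<lambda>x. x - r) b)) * Fend (bfact (n - 1))"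
    by (simp only: Fpow_sum sum_distrib_left sum_distrib_right) (rule sum.swap)
  also have "(\<Sum>a\<in>?L. wt a) = bfact ?k * hook_prod ?k (left_part ?k P)"
    using left unfolding left_part_def by (simp only: lin_ext_restrict[of "{1..?k}" P])
  also have "(\<Sum>b\<in>?R. wt (map (\<lambda>x. x - r) b)) = bfact ?l * hook_prod ?l (right_part r ?l P)"
    using right by (simp only: sum_wt_lin_ext_shift)
  also have "bfact ?k * hook_prod ?k (left_part ?k P) * Fpow r (bfact ?l * hook_prod ?l (right_part r ?l P)) =
      ?D * (hook_prod ?k (left_part ?k P) * Fpow r (hook_prod ?l (right_part r ?l P)))"
    by (simp add: Fpow_mult mult_ac)
  also have "hook_prod ?k (left_part ?k P) * Fpow r (hook_prod ?l (right_part r ?l P)) = hook_prod n P * var_sum (upset P r)"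
    by (rule hook_prod_split[OF g r, symmetric])
  finally show ?thesis
    using bfact_nonzero[of ?k] bfact_nonzero[of ?l] by (simp add: mult_ac)
qed

theorem hook_length_formula:
  "interval_forest n P \<Longrightarrow> (\<Sum>w\<in>lin_ext {1..n} P. wt w) = bfact n * hook_prod n P"
proof (induction n arbitrary: P rule: less_induct)
  case (less n)
  show ?case
  proof (cases "n = 0")
    case True
    then show ?thesis by (simp add: lin_ext_empty hook_prod_def)
  next
    case False
    have root_first: "(\<Sum>v\<in>lin_ext ({1..n} - {r}) P. wt (r # v)) =
        hook_prod n P * var_sum (upset P r) * Fend (bfact (n - 1))" if r: "r \<in> roots n P" for r
    proof (rule sum_wt_lin_ext_root_first[OF less.prems r])
      have "r \<in> {1..n}" using r by (simp add: roots_def)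
      then show "(\<Sum>a\<in>lin_ext {1..r - 1} (left_part (r - 1) P). wt a) =
          bfact (r - 1) * hook_prod (r - 1) (left_part (r - 1) P)"
        and "(\<Sum>b\<in>lin_ext {1..n - r} (right_part r (n - r) P). wt b) =
          bfact (n - r) * hook_prod (n - r) (right_part r (n - r) P)"
        using less.IH interval_forest_left_part[OF less.prems r] interval_forest_right_part[OF less.prems r]
        by auto
    qed
    have "(\<Sum>w\<in>lin_ext {1..n} P. wt w) = (\<Sum>r\<in>roots n P. \<Sum>v\<in>lin_ext ({1..n} - {r}) P. wt (r # v))"
      using False by (intro sum_lin_ext_roots[OF less.prems]) simp
    also have "\<dots> = (\<Sum>r\<in>roots n P. hook_prod n P * Fend (bfact (n - 1)) * var_sum (upset P r))"
      by (rule sum.cong[OF refl]) (simp only: root_first mult_ac)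
    also have "\<dots> = hook_prod n P * Fend (bfact (n - 1)) * (\<Sum>r\<in>roots n P. var_sum (upset P r))"
      by (simp add: sum_distrib_left)
    also have "\<dots> = hook_prod n P * Fend (bfact (n - 1)) * brk n"
      by (simp only: sum_var_sum_upset_roots[OF less.prems])
    also have "\<dots> = bfact n * hook_prod n P"
      using False by (cases n) (simp_all add: mult_ac)
    finally show ?thesis .
  qed
qed


section \<open>Recursively labelled forests\<close>

lemma exists_cover_above:
  assumes box: "P \<subseteq> {1..n} \<times> {1..n}" and refl: "\<forall>i\<in>{1..n}. (i, i) \<in> P"
    and tr: "trans P" and an: "antisym P" and ij: "(i, j) \<in> P" "i \<noteq> j"
  shows "\<exists>c. covers P j c \<and> (i, c) \<in> P"
proof -
  let ?Z = "{z. (i, z) \<in> P \<and> (z, j) \<in> P \<and> z \<noteq> j}"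
  let ?d = "\<lambda>z. card {x. (x, z) \<in> P}"
  have fin: "finite {x. (x, z) \<in> P}" for z
    by (rule finite_subset[of _ "{1..n}"]) (use box in auto)
  have "?d z \<le> card {1..n}" for z
    by (rule card_mono) (use box in auto)
  then have bound: "?d z < n + 1" for z by (simp add: le_imp_less_Suc)
  have "i \<in> ?Z" using ij refl box by auto
  then have "\<exists>c. c \<in> ?Z \<and> (\<forall>z. z \<in> ?Z \<longrightarrow> ?d z \<le> ?d c)"
    using bound by (intro ex_has_greatest_nat[of _ i _ "n + 1"]) auto
  then obtain c where c: "c \<in> ?Z" and c_max: "\<forall>z. z \<in> ?Z \<longrightarrow> ?d z \<le> ?d c"
    by blast
  have "\<not> (k \<noteq> c \<and> k \<noteq> j \<and> (c, k) \<in> P \<and> (k, j) \<in> P)" for k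
  proof
    assume k: "k \<noteq> c \<and> k \<noteq> j \<and> (c, k) \<in> P \<and> (k, j) \<in> P"
    then have "(i, k) \<in> P" using c transD[OF tr, of i c k] by blast
    then have "k \<in> ?Z" using k by blast
    moreover have "(k, k) \<in> P" using k box refl by blast
    then have "?d c < ?d k" using k by (intro card_below_less[OF fin tr an]) auto
    ultimately show False using c_max by fastforce
  qed
  then have "covers P j c" using c by (auto simp: covers_def)
  then show ?thesis using c by blast
qed

lemma rec_labelled_forest_comparable_below:
  assumes box: "P \<subseteq> {1..n} \<times> {1..n}" and refl: "\<forall>i\<in>{1..n}. (i, i) \<in> P"
    and tr: "trans P" and an: "antisym P"
    and cov: "\<forall>j\<in>{1..n}. \<forall>i1 i2. covers P j i1 \<and> covers P j i2 \<longrightarrow> i1 = i2"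
  shows "(i1, j) \<in> P \<Longrightarrow> (i2, j) \<in> P \<Longrightarrow> (i1, i2) \<in> P \<or> (i2, i1) \<in> P"
proof (induction "card {x. (x, j) \<in> P}" arbitrary: j i1 i2 rule: less_induct)
  case less
  show ?case
  proof (cases "i1 = j \<or> i2 = j")
    case True
    then show ?thesis using less.prems by auto
  next
    case False
    obtain c1 where c1: "covers P j c1" "(i1, c1) \<in> P"
      using exists_cover_above[OF box refl tr an less.prems(1)] False by blast
    obtain c2 where c2: "covers P j c2" "(i2, c2) \<in> P"
      using exists_cover_above[OF box refl tr an less.prems(2)] False by blast
    have j: "j \<in> {1..n}" using box less.prems(1) by blast
    then have "c1 = c2" using cov c1(1) c2(1) by blast
    have "finite {x. (x, j) \<in> P}"
      by (rule finite_subset[of _ "{1..n}"]) (use box in auto)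
    moreover have "(j, j) \<in> P" "(c1, j) \<in> P" "c1 \<noteq> j" using c1(1) refl j by (auto simp: covers_def)
    ultimately have "card {x. (x, c1) \<in> P} < card {x. (x, j) \<in> P}"
      by (intro card_below_less[OF _ tr an])
    then show ?thesis using less.hyps c1(2) c2(2) \<open>c1 = c2\<close> by blast
  qed
qed

lemma rec_labelled_forest_interval: "rec_labelled_forest n P \<Longrightarrow> interval_forest n P"
proof -
  assume "rec_labelled_forest n P"
  then have po: "partial_order_on {1..n} P"
    and cov: "\<forall>j\<in>{1..n}. \<forall>i1 i2. covers P j i1 \<and> covers P j i2 \<longrightarrow> i1 = i2"
    and int: "\<forall>i\<in>{1..n}. \<exists>a b. {j. (i, j) \<in> P} = {a..b}"
    unfolding rec_labelled_forest_def by blast+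
  have box: "P \<subseteq> {1..n} \<times> {1..n}" and refl: "\<forall>i\<in>{1..n}. (i, i) \<in> P"
    and tr: "trans P" and an: "antisym P"
    using po unfolding partial_order_on_def preorder_on_def refl_on_def by auto
  show "interval_forest n P"
    unfolding interval_forest_def upset_def
    using box refl tr an int rec_labelled_forest_comparable_below[OF box refl tr an cov] by blast
qed

section \<open>Concatenation of forests\<close>

text \<open>\<open>P \<union> shift_rel n Q\<close> is the forest obtained by placing \<open>Q\<close>, relabelled by \<open>i \<mapsto> i + n\<close>,
to the right of \<open>P\<close>; its linear extensions are the shuffles occurring in \<open>\<F>\<^sub>P \<F>\<^sub>Q\<close>.\<close>

definition shift_rel :: "nat \<Rightarrow> (nat \<times> nat) set \<Rightarrow> (nat \<times> nat) set" where
  "shift_rel s Q = {(i, j). s < i \<and> s < j \<and> (i - s, j - s) \<in> Q}"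

lemma concat_cases:
  assumes "P \<subseteq> {1..n} \<times> {1..n}" "(i, j) \<in> P \<union> shift_rel n Q"
  obtains "i \<le> n" "j \<le> n" "(i, j) \<in> P" | "n < i" "n < j" "(i - n, j - n) \<in> Q"
  using assms unfolding shift_rel_def by fastforce

lemma trans_concat:
  assumes "P \<subseteq> {1..n} \<times> {1..n}" "trans P" "trans Q"
  shows "trans (P \<union> shift_rel n Q)"
proof (rule transI)
  fix x y z assume xy: "(x, y) \<in> P \<union> shift_rel n Q" and yz: "(y, z) \<in> P \<union> shift_rel n Q"
  from assms(1) xy show "(x, z) \<in> P \<union> shift_rel n Q"
  proof (cases rule: concat_cases)
    case xy_P: 1
    from assms(1) yz show ?thesis
    proof (cases rule: concat_cases)
      case 1
      then show ?thesis using transD[OF assms(2) xy_P(3)] by blast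
    qed (use xy_P in simp)
  next
    case xy_Q: 2
    from assms(1) yz show ?thesis
    proof (cases rule: concat_cases)
      case 2
      then have "(x - n, z - n) \<in> Q" using transD[OF assms(3) xy_Q(3)] by blast
      then show ?thesis using xy_Q 2 by (simp add: shift_rel_def)
    qed (use xy_Q in simp)
  qed
qed

lemma antisym_concat:
  assumes "P \<subseteq> {1..n} \<times> {1..n}" "antisym P" "antisym Q"
  shows "antisym (P \<union> shift_rel n Q)"
proof (rule antisymI)
  fix x y assume xy: "(x, y) \<in> P \<union> shift_rel n Q" and yx: "(y, x) \<in> P \<union> shift_rel n Q"
  from assms(1) xy show "x = y"
  proof (cases rule: concat_cases)
    case xy_P: 1
    from assms(1) yx show ?thesis
    proof (cases rule: concat_cases)
      case 1
      then show ?thesis using antisymD[OF assms(2) xy_P(3)] by blast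
    qed (use xy_P in simp)
  next
    case xy_Q: 2
    from assms(1) yx show ?thesis
    proof (cases rule: concat_cases)
      case 2
      then have "x - n = y - n" using antisymD[OF assms(3) xy_Q(3)] by blast
      then show ?thesis using xy_Q by simp
    qed (use xy_Q in simp)
  qed
qed

lemma upset_concat_left: "i \<le> n \<Longrightarrow> upset (P \<union> shift_rel n Q) i = upset P i"
  by (auto simp: upset_def shift_rel_def)

lemma upset_concat_right:
  assumes gP: "interval_forest n P" and gQ: "interval_forest m Q" and i1: "1 \<le> i"
  shows "upset (P \<union> shift_rel n Q) (i + n) = (\<lambda>x. x + n) ` upset Q i"
proof
  have inP: "(a, b) \<in> P \<Longrightarrow> a \<le> n" for a b using interval_forestD(1)[OF gP] by auto
  show "upset (P \<union> shift_rel n Q) (i + n) \<subseteq> (\<lambda>x. x + n) ` upset Q i"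
  proof
    fix j assume "j \<in> upset (P \<union> shift_rel n Q) (i + n)"
    then have "(i + n, j) \<in> P \<union> shift_rel n Q" by (simp add: upset_def)
    moreover have "(i + n, j) \<notin> P" using inP i1 by fastforce
    ultimately have "(i + n, j) \<in> shift_rel n Q" by blast
    then have "n < j" "(i, j - n) \<in> Q" by (auto simp: shift_rel_def)
    then show "j \<in> (\<lambda>x. x + n) ` upset Q i" by (auto simp: upset_def image_iff intro!: bexI[of _ "j - n"])
  qed
  show "(\<lambda>x. x + n) ` upset Q i \<subseteq> upset (P \<union> shift_rel n Q) (i + n)"
  proof
    fix j assume "j \<in> (\<lambda>x. x + n) ` upset Q i"
    then obtain j' where j': "j = j' + n" "(i, j') \<in> Q" by (auto simp: upset_def)
    moreover have "1 \<le> j'" using interval_forestD(1)[OF gQ j'(2)] by auto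
    ultimately show "j \<in> upset (P \<union> shift_rel n Q) (i + n)" using i1 by (simp add: upset_def shift_rel_def)
  qed
qed

lemma concat_subset:
  assumes "P \<subseteq> {1..n} \<times> {1..n}" "Q \<subseteq> {1..m} \<times> {1..m}"
  shows "P \<union> shift_rel n Q \<subseteq> {1..n + m} \<times> {1..n + m}"
proof (rule subrelI)
  fix i j assume "(i, j) \<in> P \<union> shift_rel n Q"
  with assms(1) show "(i, j) \<in> {1..n + m} \<times> {1..n + m}"
  proof (cases rule: concat_cases)
    case 1
    then show ?thesis using assms(1) by auto
  next
    case in_Q: 2
    then have "(i - n, j - n) \<in> {1..m} \<times> {1..m}" using assms(2) by blast
    then show ?thesis using in_Q by auto
  qed
qed

lemma comparable_below_concat:
  assumes gP: "interval_forest n P" and gQ: "interval_forest m Q"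
    and "(i1, j) \<in> P \<union> shift_rel n Q" "(i2, j) \<in> P \<union> shift_rel n Q"
  shows "(i1, i2) \<in> P \<union> shift_rel n Q \<or> (i2, i1) \<in> P \<union> shift_rel n Q"
proof -
  have box: "P \<subseteq> {1..n} \<times> {1..n}" using interval_forestD(1)[OF gP] by auto
  from box assms(3) show ?thesis
  proof (cases rule: concat_cases)
    case in_P: 1
    from box assms(4) show ?thesis
      by (cases rule: concat_cases) (use in_P interval_forestD(6)[OF gP] in auto)
  next
    case in_Q: 2
    from box assms(4) show ?thesis
      by (cases rule: concat_cases) (use in_Q interval_forestD(6)[OF gQ] in \<open>auto simp: shift_rel_def\<close>)
  qed
qed

lemma interval_forest_concat:
  assumes gP: "interval_forest n P" and gQ: "interval_forest m Q"
  shows "interval_forest (n + m) (P \<union> shift_rel n Q)"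
proof -
  let ?R = "P \<union> shift_rel n Q"
  have box: "P \<subseteq> {1..n} \<times> {1..n}" using interval_forestD(1)[OF gP] by auto
  have "?R \<subseteq> {1..n + m} \<times> {1..n + m}"
    using interval_forestD(1)[OF gQ] by (intro concat_subset[OF box]) auto
  moreover have "(i, i) \<in> ?R" if "i \<in> {1..n + m}" for i
  proof (cases "i \<le> n")
    case True
    then show ?thesis using that interval_forestD(2)[OF gP, of i] by simp
  next
    case False
    then have "i - n \<in> {1..m}" using that by auto
    then show ?thesis using False interval_forestD(2)[OF gQ] by (simp add: shift_rel_def)
  qed
  moreover have "trans ?R" "antisym ?R"
    using gP gQ box by (simp_all add: interval_forest_def trans_concat antisym_concat)
  moreover have "\<exists>a b. upset ?R i = {a..b}" if "i \<in> {1..n + m}" for i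
  proof (cases "i \<le> n")
    case True
    then show ?thesis using that upset_concat_left interval_forestD(5)[OF gP] by simp
  next
    case False
    then have i: "i - n \<in> {1..m}" "i = i - n + n" using that by auto
    obtain a b where "upset Q (i - n) = {a..b}" using interval_forestD(5)[OF gQ i(1)] by blast
    then have "upset ?R i = {a + n..b + n}"
      using upset_concat_right[OF gP gQ, of "i - n"] i by (simp add: image_add_const_atLeastAtMost)
    then show ?thesis by blast
  qed
  moreover have "(i1, i2) \<in> ?R \<or> (i2, i1) \<in> ?R" if "(i1, j) \<in> ?R" "(i2, j) \<in> ?R" for j i1 i2
    using comparable_below_concat[OF gP gQ that] .
  ultimately show ?thesis unfolding interval_forest_def by blast
qed

lemma hook_prod_concat:
  assumes gP: "interval_forest n P" and gQ: "interval_forest m Q"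
  shows "hook_prod (n + m) (P \<union> shift_rel n Q) = hook_prod n P * Fpow n (hook_prod m Q)"
proof -
  let ?f = "\<lambda>i. inverse (var_sum (upset (P \<union> shift_rel n Q) i))"
  have "{1..n + m} = {1..n} \<union> {n + 1..n + m}" by auto
  then have "hook_prod (n + m) (P \<union> shift_rel n Q) = (\<Prod>i\<in>{1..n}. ?f i) * (\<Prod>i\<in>{n + 1..n + m}. ?f i)"
    unfolding hook_prod_def by (simp add: prod.union_disjoint)
  also have "(\<Prod>i\<in>{1..n}. ?f i) = hook_prod n P"
    unfolding hook_prod_def by (intro prod.cong refl) (simp add: upset_concat_left)
  also have "(\<Prod>i\<in>{n + 1..n + m}. ?f i) = Fpow n (hook_prod m Q)"
    using upset_concat_right[OF gP gQ] by (intro Fpow_hook_prod[OF gQ, symmetric]) simp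
  finally show ?thesis .
qed

lemma sum_wt_lin_ext_concat:
  assumes gP: "interval_forest n P" and gQ: "interval_forest m Q"
  shows "(\<Sum>w\<in>lin_ext {1..n + m} (P \<union> shift_rel n Q). wt w) =
    (\<Sum>a\<in>lin_ext {1..n} P. \<Sum>b\<in>lin_ext {1..m} Q. \<Sum>v\<in>shuffles a (map (\<lambda>x. x + n) b). wt v)"
proof -
  let ?R = "P \<union> shift_rel n Q"
  have box: "P \<subseteq> {1..n} \<times> {1..n}" using interval_forestD(1)[OF gP] by auto
  have "{1..n + m} = {1..n} \<union> {n + 1..n + m}" by auto
  moreover have "\<forall>x\<in>{1..n}. \<forall>y\<in>{n + 1..n + m}. (x, y) \<notin> ?R \<and> (y, x) \<notin> ?R"
    using box by (auto simp: shift_rel_def)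
  ultimately have "(\<Sum>w\<in>lin_ext {1..n + m} ?R. wt w) =
      (\<Sum>a\<in>lin_ext {1..n} ?R. \<Sum>b\<in>lin_ext {n + 1..n + m} ?R. \<Sum>v\<in>shuffles a b. wt v)"
    by (simp add: sum_lin_ext_union)
  also have "lin_ext {1..n} ?R = lin_ext {1..n} P"
  proof -
    have "?R \<inter> {1..n} \<times> {1..n} = P \<inter> {1..n} \<times> {1..n}" by (auto simp: shift_rel_def)
    then show ?thesis by (simp only: lin_ext_restrict[of "{1..n}" ?R] lin_ext_restrict[of "{1..n}" P])
  qed
  also have "(\<Sum>a\<in>lin_ext {1..n} P. \<Sum>b\<in>lin_ext {n + 1..n + m} ?R. \<Sum>v\<in>shuffles a b. wt v) =
      (\<Sum>a\<in>lin_ext {1..n} P. \<Sum>b\<in>lin_ext {1..m} {(i, j). (i + n, j + n) \<in> ?R}. \<Sum>v\<in>shuffles a (map (\<lambda>x. x + n) b). wt v)"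
  proof -
    have inj: "inj (\<lambda>x::nat. x + n)" by (simp add: inj_on_def)
    have img: "(\<lambda>x. x + n) ` {1..m} = {n + 1..n + m}"
      by (simp add: image_add_const_atLeastAtMost add.commute)
    show ?thesis
    proof (rule sum.cong[OF refl])
      fix a
      show "(\<Sum>b\<in>lin_ext {n + 1..n + m} ?R. \<Sum>v\<in>shuffles a b. wt v) =
          (\<Sum>b\<in>lin_ext {1..m} {(i, j). (i + n, j + n) \<in> ?R}. \<Sum>v\<in>shuffles a (map (\<lambda>x. x + n) b). wt v)"
        using sum_lin_ext_image[OF inj, where X = "{1..m}" and R = ?R and g = "\<lambda>b. \<Sum>v\<in>shuffles a b. wt v"]
        unfolding img .
    qed
  qed
  also have "lin_ext {1..m} {(i, j). (i + n, j + n) \<in> ?R} = lin_ext {1..m} Q"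
  proof -
    have "{(i, j). (i + n, j + n) \<in> ?R} \<inter> {1..m} \<times> {1..m} = Q \<inter> {1..m} \<times> {1..m}"
      using box by (auto simp: shift_rel_def)
    then show ?thesis
      by (simp only: lin_ext_restrict[of "{1..m}" "{(i, j). (i + n, j + n) \<in> ?R}"] lin_ext_restrict[of "{1..m}" Q])
  qed
  finally show ?thesis .
qed


definition skew_scale :: "ratfun \<Rightarrow> skew \<Rightarrow> skew" where
  "skew_scale x A = Poly_Mapping.map ((*) x) A"

lemma lookup_map_strict: "g 0 = 0 \<Longrightarrow> Poly_Mapping.lookup (Poly_Mapping.map g p) k = g (Poly_Mapping.lookup p k)"
  by transfer (simp add: when_def)

lemma lookup_skew_scale: "Poly_Mapping.lookup (skew_scale x A) k = x * Poly_Mapping.lookup A k"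
  by (simp add: skew_scale_def lookup_map_strict)

lemma lookup_fq_scale: "Poly_Mapping.lookup (fq_scale c f) k = c * Poly_Mapping.lookup f k"
  by (simp add: fq_scale_def lookup_map_strict)

lemma keys_fq_scale: "Poly_Mapping.keys (fq_scale c f) \<subseteq> Poly_Mapping.keys f"
  by (auto simp: in_keys_iff lookup_fq_scale)

lemma skew_scale_add: "skew_scale x (A + B) = skew_scale x A + skew_scale x B"
  by (rule poly_mapping_eqI) (simp add: lookup_skew_scale lookup_add algebra_simps)
lemma skew_scale_zero: "skew_scale x 0 = 0"
  by (rule poly_mapping_eqI) (simp add: lookup_skew_scale)
lemma skew_scale_single: "skew_scale x (Poly_Mapping.single k v) = Poly_Mapping.single k (x * v)"
  by (rule poly_mapping_eqI) (simp add: lookup_skew_scale lookup_single when_def)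
lemma skew_scale_sum: "skew_scale x (sum f I) = (\<Sum>i\<in>I. skew_scale x (f i))"
  by (induction I rule: infinite_finite_induct) (simp_all add: skew_scale_zero skew_scale_add)

lemma fq_scale_add: "fq_scale c (A + B) = fq_scale c A + fq_scale c B"
  by (rule poly_mapping_eqI) (simp add: lookup_fq_scale lookup_add algebra_simps)
lemma fq_scale_zero: "fq_scale c 0 = 0"
  by (rule poly_mapping_eqI) (simp add: lookup_fq_scale)
lemma fq_scale_single: "fq_scale c (Poly_Mapping.single k v) = Poly_Mapping.single k (c * v)"
  by (rule poly_mapping_eqI) (simp add: lookup_fq_scale lookup_single when_def)
lemma fq_scale_sum: "fq_scale c (sum f I) = (\<Sum>i\<in>I. fq_scale c (f i))"
  by (induction I rule: infinite_finite_induct) (simp_all add: fq_scale_zero fq_scale_add)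

lemma phi_inv_eq_sum:
  assumes "finite A" "Poly_Mapping.keys f \<subseteq> A"
  shows "phi_inv f = (\<Sum>w\<in>A. Poly_Mapping.single (length w) (rconst (Poly_Mapping.lookup f w) * (wt w / bfact (length w))))"
  unfolding phi_inv_def
  by (rule sum.mono_neutral_left) (use assms in \<open>auto simp: in_keys_iff rconst_zero\<close>)

lemma phi_inv_zero: "phi_inv 0 = 0"
  by (simp add: phi_inv_def)

lemma phi_inv_add: "phi_inv (f + g) = phi_inv f + phi_inv g"
proof -
  let ?A = "Poly_Mapping.keys f \<union> Poly_Mapping.keys g"
  have "Poly_Mapping.keys (f + g) \<subseteq> ?A" by (rule keys_add)
  then show ?thesis
    by (simp add: phi_inv_eq_sum[of ?A] lookup_add rconst_add distrib_right add_divide_distrib single_add sum.distrib)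
qed

lemma phi_inv_sum: "phi_inv (sum f I) = (\<Sum>i\<in>I. phi_inv (f i))"
  by (induction I rule: infinite_finite_induct) (simp_all add: phi_inv_zero phi_inv_add)

lemma phi_inv_single: "phi_inv (Poly_Mapping.single w q) = Poly_Mapping.single (length w) (rconst q * (wt w / bfact (length w)))"
  by (simp add: phi_inv_eq_sum[of "{w}"])

lemma phi_inv_scale: "phi_inv (fq_scale c f) = skew_scale (rconst c) (phi_inv f)"
proof -
  have k: "Poly_Mapping.keys (fq_scale c f) \<subseteq> Poly_Mapping.keys f" by (rule keys_fq_scale)
  show ?thesis
    by (simp add: phi_inv_eq_sum[OF _ k] phi_inv_eq_sum[of "Poly_Mapping.keys f" f] lookup_fq_scale rconst_mult
        skew_scale_sum skew_scale_single mult.assoc)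
qed

lemma fq_mult_eq_sum:
  assumes "finite A" "Poly_Mapping.keys f \<subseteq> A" "finite B" "Poly_Mapping.keys g \<subseteq> B"
  shows "fq_mult f g = (\<Sum>a\<in>A. \<Sum>b\<in>B. \<Sum>w\<in>shuffles a (map (\<lambda>x. x + length a) b).
     Poly_Mapping.single w (Poly_Mapping.lookup f a * Poly_Mapping.lookup g b))"
proof -
  have "fq_mult f g = (\<Sum>a\<in>A. \<Sum>b\<in>Poly_Mapping.keys g. \<Sum>w\<in>shuffles a (map (\<lambda>x. x + length a) b).
     Poly_Mapping.single w (Poly_Mapping.lookup f a * Poly_Mapping.lookup g b))"
    unfolding fq_mult_def
    by (rule sum.mono_neutral_left) (use assms in \<open>auto simp: in_keys_iff\<close>)
  also have "\<dots> = (\<Sum>a\<in>A. \<Sum>b\<in>B. \<Sum>w\<in>shuffles a (map (\<lambda>x. x + length a) b).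
     Poly_Mapping.single w (Poly_Mapping.lookup f a * Poly_Mapping.lookup g b))"
    by (intro sum.cong refl sum.mono_neutral_left) (use assms in \<open>auto simp: in_keys_iff\<close>)
  finally show ?thesis .
qed

lemma fq_mult_zero_left: "fq_mult 0 g = 0" by (simp add: fq_mult_def)
lemma fq_mult_zero_right: "fq_mult f 0 = 0" by (simp add: fq_mult_def)

lemma fq_mult_add_left: "fq_mult (f1 + f2) g = fq_mult f1 g + fq_mult f2 g"
proof -
  let ?A = "Poly_Mapping.keys f1 \<union> Poly_Mapping.keys f2" and ?B = "Poly_Mapping.keys g"
  have "Poly_Mapping.keys (f1 + f2) \<subseteq> ?A" by (rule keys_add)
  then show ?thesis
    by (simp add: fq_mult_eq_sum[of ?A _ ?B] lookup_add distrib_right single_add sum.distrib)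
qed

lemma fq_mult_add_right: "fq_mult f (g1 + g2) = fq_mult f g1 + fq_mult f g2"
proof -
  let ?A = "Poly_Mapping.keys f" and ?B = "Poly_Mapping.keys g1 \<union> Poly_Mapping.keys g2"
  have "Poly_Mapping.keys (g1 + g2) \<subseteq> ?B" by (rule keys_add)
  then show ?thesis
    by (simp add: fq_mult_eq_sum[of ?A _ ?B] lookup_add distrib_left single_add sum.distrib)
qed

lemma fq_mult_scale_left: "fq_mult (fq_scale c f) g = fq_scale c (fq_mult f g)"
proof -
  have k: "Poly_Mapping.keys (fq_scale c f) \<subseteq> Poly_Mapping.keys f" by (rule keys_fq_scale)
  show ?thesis
    by (simp add: fq_mult_eq_sum[OF _ k, of "Poly_Mapping.keys g"] fq_mult_eq_sum[of "Poly_Mapping.keys f" f "Poly_Mapping.keys g"]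
        lookup_fq_scale fq_scale_sum fq_scale_single mult.assoc)
qed

lemma fq_mult_scale_right: "fq_mult f (fq_scale c g) = fq_scale c (fq_mult f g)"
proof -
  have k: "Poly_Mapping.keys (fq_scale c g) \<subseteq> Poly_Mapping.keys g" by (rule keys_fq_scale)
  show ?thesis
    by (simp add: fq_mult_eq_sum[OF _ _ _ k, of "Poly_Mapping.keys f"] fq_mult_eq_sum[of "Poly_Mapping.keys f" f "Poly_Mapping.keys g"]
        lookup_fq_scale fq_scale_sum fq_scale_single mult_ac)
qed

lemma skew_mult_eq_sum:
  assumes "finite A" "Poly_Mapping.keys X \<subseteq> A" "finite B" "Poly_Mapping.keys Y \<subseteq> B"
  shows "skew_mult X Y = (\<Sum>k\<in>A. \<Sum>l\<in>B.
      Poly_Mapping.single (k + l) (Poly_Mapping.lookup X k * Fpow k (Poly_Mapping.lookup Y l)))"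
proof -
  have "skew_mult X Y = (\<Sum>k\<in>A. \<Sum>l\<in>Poly_Mapping.keys Y.
      Poly_Mapping.single (k + l) (Poly_Mapping.lookup X k * Fpow k (Poly_Mapping.lookup Y l)))"
    unfolding skew_mult_def
    by (rule sum.mono_neutral_left) (use assms in \<open>auto simp: in_keys_iff\<close>)
  also have "\<dots> = (\<Sum>k\<in>A. \<Sum>l\<in>B.
      Poly_Mapping.single (k + l) (Poly_Mapping.lookup X k * Fpow k (Poly_Mapping.lookup Y l)))"
    by (intro sum.cong refl sum.mono_neutral_left) (use assms in \<open>auto simp: in_keys_iff Fpow_zero\<close>)
  finally show ?thesis .
qed

lemma skew_mult_zero_left: "skew_mult 0 B = 0" by (simp add: skew_mult_def)
lemma skew_mult_zero_right: "skew_mult A 0 = 0" by (simp add: skew_mult_def)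

lemma skew_mult_add_left: "skew_mult (A1 + A2) B = skew_mult A1 B + skew_mult A2 B"
proof -
  let ?A = "Poly_Mapping.keys A1 \<union> Poly_Mapping.keys A2" and ?B = "Poly_Mapping.keys B"
  have "Poly_Mapping.keys (A1 + A2) \<subseteq> ?A" by (rule keys_add)
  then show ?thesis
    by (simp add: skew_mult_eq_sum[of ?A _ ?B] lookup_add distrib_right single_add sum.distrib)
qed

lemma skew_mult_add_right: "skew_mult A (B1 + B2) = skew_mult A B1 + skew_mult A B2"
proof -
  let ?A = "Poly_Mapping.keys A" and ?B = "Poly_Mapping.keys B1 \<union> Poly_Mapping.keys B2"
  have "Poly_Mapping.keys (B1 + B2) \<subseteq> ?B" by (rule keys_add)
  then show ?thesis
    by (simp add: skew_mult_eq_sum[of ?A _ ?B] lookup_add Fpow_add distrib_left single_add sum.distrib)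
qed

lemma keys_skew_scale: "Poly_Mapping.keys (skew_scale x A) \<subseteq> Poly_Mapping.keys A"
  by (auto simp: in_keys_iff lookup_skew_scale)

lemma skew_mult_scale_left: "skew_mult (skew_scale x A) B = skew_scale x (skew_mult A B)"
proof -
  have k: "Poly_Mapping.keys (skew_scale x A) \<subseteq> Poly_Mapping.keys A" by (rule keys_skew_scale)
  show ?thesis
    by (simp add: skew_mult_eq_sum[OF _ k, of "Poly_Mapping.keys B"] skew_mult_eq_sum[of "Poly_Mapping.keys A" A "Poly_Mapping.keys B"]
        lookup_skew_scale skew_scale_sum skew_scale_single mult.assoc)
qed

lemma skew_mult_scale_right: "skew_mult A (skew_scale (rconst c) B) = skew_scale (rconst c) (skew_mult A B)"
proof -
  have k: "Poly_Mapping.keys (skew_scale (rconst c) B) \<subseteq> Poly_Mapping.keys B" by (rule keys_skew_scale)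
  show ?thesis
    by (simp add: skew_mult_eq_sum[OF _ _ _ k, of "Poly_Mapping.keys A"] skew_mult_eq_sum[of "Poly_Mapping.keys A" A "Poly_Mapping.keys B"]
        lookup_skew_scale skew_scale_sum skew_scale_single Fpow_mult Fpow_rconst mult_ac)
qed


lemma sum_single: "(\<Sum>i\<in>I. Poly_Mapping.single k (f i)) = Poly_Mapping.single k (\<Sum>i\<in>I. f i)"
  by (induction I rule: infinite_finite_induct) (simp_all add: single_add)

lemma finite_linext: "finite (linext n P)"
  by (simp add: linext_eq_lin_ext finite_lin_ext)

lemma lookup_fqF_poset: "Poly_Mapping.lookup (fqF_poset n P) w = (if w \<in> linext n P then 1 else 0)"
  using finite_linext[of n P]
  by (simp add: fqF_poset_def fqF_def lookup_sum lookup_single when_def)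

lemma keys_fqF_poset: "Poly_Mapping.keys (fqF_poset n P) \<subseteq> linext n P"
  by (auto simp: in_keys_iff lookup_fqF_poset split: if_splits)

lemma length_linext: "w \<in> linext n P \<Longrightarrow> length w = n"
  by (simp add: linext_eq_lin_ext length_lin_ext)

lemma phi_inv_fqF_poset:
  assumes g: "interval_forest n P"
  shows "phi_inv (fqF_poset n P) = Poly_Mapping.single n (hook_prod n P)"
proof -
  have "phi_inv (fqF_poset n P) = (\<Sum>w\<in>linext n P. Poly_Mapping.single n (wt w / bfact n))"
    by (simp add: phi_inv_eq_sum[OF finite_linext keys_fqF_poset] lookup_fqF_poset rconst_one length_linext
        cong: sum.cong)
  also have "\<dots> = Poly_Mapping.single n ((\<Sum>w\<in>linext n P. wt w) / bfact n)"
    by (simp add: sum_single sum_divide_distrib)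
  also have "(\<Sum>w\<in>linext n P. wt w) = bfact n * hook_prod n P"
    using hook_length_formula[OF g] by (simp add: linext_eq_lin_ext)
  finally show ?thesis using bfact_nonzero[of n] by simp
qed

lemma phi_inv_mult_fqF_poset:
  assumes gP: "interval_forest n P" and gQ: "interval_forest m Q"
  shows "phi_inv (fq_mult (fqF_poset n P) (fqF_poset m Q)) =
    skew_mult (phi_inv (fqF_poset n P)) (phi_inv (fqF_poset m Q))"
proof -
  let ?L = "linext n P" and ?L' = "linext m Q"
  have "fq_mult (fqF_poset n P) (fqF_poset m Q) =
      (\<Sum>a\<in>?L. \<Sum>b\<in>?L'. \<Sum>w\<in>shuffles a (map (\<lambda>x. x + n) b). Poly_Mapping.single w 1)"
    by (simp add: fq_mult_eq_sum[OF finite_linext keys_fqF_poset finite_linext keys_fqF_poset]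
        lookup_fqF_poset length_linext cong: sum.cong)
  then have "phi_inv (fq_mult (fqF_poset n P) (fqF_poset m Q)) =
      (\<Sum>a\<in>?L. \<Sum>b\<in>?L'. \<Sum>w\<in>shuffles a (map (\<lambda>x. x + n) b). Poly_Mapping.single (n + m) (wt w / bfact (n + m)))"
    by (simp add: phi_inv_sum phi_inv_single rconst_one length_shuffles length_linext cong: sum.cong)
  also have "\<dots> = Poly_Mapping.single (n + m)
      ((\<Sum>a\<in>?L. \<Sum>b\<in>?L'. \<Sum>w\<in>shuffles a (map (\<lambda>x. x + n) b). wt w) / bfact (n + m))"
    by (simp add: sum_single sum_divide_distrib)
  also have "(\<Sum>a\<in>?L. \<Sum>b\<in>?L'. \<Sum>w\<in>shuffles a (map (\<lambda>x. x + n) b). wt w) =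
      bfact (n + m) * (hook_prod n P * Fpow n (hook_prod m Q))"
    using sum_wt_lin_ext_concat[OF gP gQ] hook_length_formula[OF interval_forest_concat[OF gP gQ]] hook_prod_concat[OF gP gQ]
    by (simp add: linext_eq_lin_ext)
  also have "Poly_Mapping.single (n + m) (bfact (n + m) * (hook_prod n P * Fpow n (hook_prod m Q)) / bfact (n + m)) =
      skew_mult (Poly_Mapping.single n (hook_prod n P)) (Poly_Mapping.single m (hook_prod m Q))"
    using bfact_nonzero[of "n + m"] by (simp add: skew_mult_eq_sum[of "{n}" _ "{m}"])
  finally show ?thesis by (simp add: phi_inv_fqF_poset gP gQ)
qed

lemma phi_inv_mult_PBT:
  assumes "f \<in> PBT" "g \<in> PBT"
  shows "phi_inv (fq_mult f g) = skew_mult (phi_inv f) (phi_inv g)"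
  using assms
proof (induction f arbitrary: g rule: PBT.induct)
  case PBT_zero
  then show ?case by (simp add: fq_mult_zero_left phi_inv_zero skew_mult_zero_left)
next
  case (PBT_gen n P)
  have gP: "interval_forest n P" by (rule rec_labelled_forest_interval[OF PBT_gen.hyps])
  from PBT_gen.prems show ?case
  proof (induction g rule: PBT.induct)
    case PBT_zero
    then show ?case by (simp add: fq_mult_zero_right phi_inv_zero skew_mult_zero_right)
  next
    case (PBT_gen m Q)
    then show ?case using phi_inv_mult_fqF_poset[OF gP rec_labelled_forest_interval[OF PBT_gen.hyps]] by simp
  next
    case (PBT_add g1 g2)
    then show ?case by (simp add: fq_mult_add_right phi_inv_add skew_mult_add_right)
  next
    case (PBT_scale g c)
    then show ?case by (simp add: fq_mult_scale_right phi_inv_scale skew_mult_scale_right)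
  qed
next
  case (PBT_add f1 f2)
  then show ?case by (simp add: fq_mult_add_left phi_inv_add skew_mult_add_left)
next
  case (PBT_scale f c)
  then show ?case by (simp add: fq_mult_scale_left phi_inv_scale skew_mult_scale_left)
qed

theorem proposition9p5:
  shows "phi_inv fq_one = skew_one \<and>
         (\<forall>f\<in>PBT. \<forall>g\<in>PBT. phi_inv (fq_mult f g) = skew_mult (phi_inv f) (phi_inv g))"
proof
  show "phi_inv fq_one = skew_one"
    by (simp add: fq_one_def fqF_def phi_inv_single rconst_one skew_one_def)
  show "\<forall>f\<in>PBT. \<forall>g\<in>PBT. phi_inv (fq_mult f g) = skew_mult (phi_inv f) (phi_inv g)"
    using phi_inv_mult_PBT by blast
qed


end
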